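(* Let $A$ be a basic connected finite dimensional algebra over an algebraically closed field $k$ with ordinary quiver $Q$ without oriented cycles, and assume $A$ is constricted, i.e. $\dim_k e_yAe_x=1$ for every arrow $x\to y$ of $Q$. Let $\nu\colon kQ\twoheadrightarrow A$ be any presentation and $I=\mathsf{Ker}(\nu)$. Then $\theta_\nu\colon\mathsf{Hom}(\pi_1(Q,I),k^+)\to\mathsf{HH}^1(A)$ is an isomorphism. In particular $\mathsf{HH}^1(A)$ is an abelian Lie algebra.
   Context: Fix a complete set $e_1,\dots,e_n$ of primitive orthogonal idempotents of $A$ indexed by $Q_0=\{1,\dots,n\}$, $E=\bigoplus ke_i$. A presentation is a surjective algebra map $\nu\colon kQ\twoheadrightarrow A$ with admissible kernel ($(kQ^+)^N\subseteq\mathsf{Ker}\,\nu\subseteq(kQ^+)^2$ for some $N\ge2$, $kQ^+$ the arrow ideal) and $\nu(e_i)=e_i$. $\mathsf{HH}^1(A)=Der_0(A)/Int_0(A)$, with $Der_0(A)$ the derivations vanishing on all $e_i$ (commutator bracket) and $Int_0(A)=\{a\mapsto ea-ae\mid e\in E\}$. Walks: paths in $Q$ with formal inverse arrows allowed. $\sim_I$ is the smallest equivalence relation on walks with $\alpha\alpha^{-1}\sim_I e_y$, $\alpha^{-1}\alpha\sim_I e_x$ for arrows $\alpha\colon x\to y$, compatible with concatenation, and identifying two paths occurring with nonzero coefficient in a same minimal relation of $I$ (a nonzero $\sum t_iu_i\in I$, $t_i\neq0$, distinct paths, no nonempty proper subsum in $I$). $\pi_1(Q,I)$ is the group of classes of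 closed walks at a fixed vertex $x_0$. Fix a maximal tree $T$ of $Q$, $\gamma_x$ the minimal walk in $T$ from $x_0$ to $x$. For a group homomorphism $f\colon\pi_1(Q,I)\to k^+$, $\theta_\nu(f)$ is the class of the derivation $\tilde f$ with $\tilde f(\nu(u))=f([\gamma_y^{-1}u\gamma_x]_I)\nu(u)$ for paths $u$ from $x$ to $y$. *)

theory Defs
  imports "HOL-Computational_Algebra.Polynomial" "HOL-Algebra.Group"
begin

text \<open>A path is a pair (x, as): start vertex x and list of arrows in order of
traversal (as = [] is the trivial path e_x).\<close>

definition quiver :: "'v set \<Rightarrow> 'e set \<Rightarrow> ('e \<Rightarrow> 'v) \<Rightarrow> ('e \<Rightarrow> 'v) \<Rightarrow> bool" where
  "quiver Q0 Q1 s t \<longleftrightarrow> finite Q0 \<and> Q0 \<noteq> {} \<and> finite Q1 \<and> (\<forall>a\<in>Q1. s a \<in> Q0 \<and> t a \<in> Q0)"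

fun chain :: "('e \<Rightarrow> 'v) \<Rightarrow> ('e \<Rightarrow> 'v) \<Rightarrow> 'v \<Rightarrow> 'e list \<Rightarrow> bool" where
  "chain s t x [] = True"
| "chain s t x (a # as) = (s a = x \<and> chain s t (t a) as)"

definition is_path :: "'v set \<Rightarrow> 'e set \<Rightarrow> ('e \<Rightarrow> 'v) \<Rightarrow> ('e \<Rightarrow> 'v) \<Rightarrow> 'v \<times> 'e list \<Rightarrow> bool" where
  "is_path Q0 Q1 s t p \<longleftrightarrow> fst p \<in> Q0 \<and> set (snd p) \<subseteq> Q1 \<and> chain s t (fst p) (snd p)"

fun ptgt :: "('e \<Rightarrow> 'v) \<Rightarrow> 'v \<times> 'e list \<Rightarrow> 'v" where
  "ptgt t (x, as) = (if as = [] then x else t (last as))"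

definition acyclic_quiver :: "'v set \<Rightarrow> 'e set \<Rightarrow> ('e \<Rightarrow> 'v) \<Rightarrow> ('e \<Rightarrow> 'v) \<Rightarrow> bool" where
  "acyclic_quiver Q0 Q1 s t \<longleftrightarrow>
     (\<forall>p. is_path Q0 Q1 s t p \<and> snd p \<noteq> [] \<longrightarrow> ptgt t p \<noteq> fst p)"

text \<open>Walks: start vertex and list of steps (arrow, True) = arrow traversed forwards,
(arrow, False) = formal inverse of the arrow.  Steps are listed in order of traversal.\<close>
type_synonym ('v,'e) walk = "'v \<times> ('e \<times> bool) list"

fun step_src :: "('e \<Rightarrow> 'v) \<Rightarrow> ('e \<Rightarrow> 'v) \<Rightarrow> 'e \<times> bool \<Rightarrow> 'v" where
  "step_src s t (a, b) = (if b then s a else t a)"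

fun step_tgt :: "('e \<Rightarrow> 'v) \<Rightarrow> ('e \<Rightarrow> 'v) \<Rightarrow> 'e \<times> bool \<Rightarrow> 'v" where
  "step_tgt s t (a, b) = (if b then t a else s a)"

fun wchain :: "('e \<Rightarrow> 'v) \<Rightarrow> ('e \<Rightarrow> 'v) \<Rightarrow> 'v \<Rightarrow> ('e \<times> bool) list \<Rightarrow> bool" where
  "wchain s t x [] = True"
| "wchain s t x (st # sts) = (step_src s t st = x \<and> wchain s t (step_tgt s t st) sts)"

definition is_walk :: "'v set \<Rightarrow> 'e set \<Rightarrow> ('e \<Rightarrow> 'v) \<Rightarrow> ('e \<Rightarrow> 'v) \<Rightarrow> ('v,'e) walk \<Rightarrow> bool" where
  "is_walk Q0 Q1 s t w \<longleftrightarrow> fst w \<in> Q0 \<and> fst ` set (snd w) \<subseteq> Q1 \<and> wchain s t (fst w) (snd w)"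

fun wtgt :: "('e \<Rightarrow> 'v) \<Rightarrow> ('e \<Rightarrow> 'v) \<Rightarrow> ('v,'e) walk \<Rightarrow> 'v" where
  "wtgt s t (x, sts) = (if sts = [] then x else step_tgt s t (last sts))"

text \<open>Concatenation: first traverse w1, then w2 (meaningful when wtgt w1 = fst w2).\<close>
definition wconcat :: "('v,'e) walk \<Rightarrow> ('v,'e) walk \<Rightarrow> ('v,'e) walk" where
  "wconcat w1 w2 = (fst w1, snd w1 @ snd w2)"

definition winv :: "('e \<Rightarrow> 'v) \<Rightarrow> ('e \<Rightarrow> 'v) \<Rightarrow> ('v,'e) walk \<Rightarrow> ('v,'e) walk" where
  "winv s t w = (wtgt s t w, rev (map (\<lambda>(a, b). (a, \<not> b)) (snd w)))"

definition path_walk :: "'v \<times> 'e list \<Rightarrow> ('v,'e) walk" where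
  "path_walk p = (fst p, map (\<lambda>a. (a, True)) (snd p))"

definition connected_quiver :: "'v set \<Rightarrow> 'e set \<Rightarrow> ('e \<Rightarrow> 'v) \<Rightarrow> ('e \<Rightarrow> 'v) \<Rightarrow> bool" where
  "connected_quiver Q0 Q1 s t \<longleftrightarrow>
     (\<forall>x\<in>Q0. \<forall>y\<in>Q0. \<exists>w. is_walk Q0 Q1 s t w \<and> fst w = x \<and> wtgt s t w = y)"

definition reduced :: "('e \<times> bool) list \<Rightarrow> bool" where
  "reduced sts \<longleftrightarrow> (\<forall>i. Suc i < length sts \<longrightarrow>
      \<not> (fst (sts ! i) = fst (sts ! Suc i) \<and> snd (sts ! i) \<noteq> snd (sts ! Suc i)))"

definition maximal_tree :: "'v set \<Rightarrow> 'e set \<Rightarrow> ('e \<Rightarrow> 'v) \<Rightarrow> ('e \<Rightarrow> 'v) \<Rightarrow> 'e set \<Rightarrow> bool" where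
  "maximal_tree Q0 Q1 s t T \<longleftrightarrow> T \<subseteq> Q1 \<and> connected_quiver Q0 T s t \<and>
     (\<forall>w. is_walk Q0 T s t w \<and> wtgt s t w = fst w \<and> reduced (snd w) \<longrightarrow> snd w = [])"

text \<open>Elements of kQ are coefficient functions on paths, supported on valid paths.\<close>
type_synonym ('v,'e,'k) pelem = "'v \<times> 'e list \<Rightarrow> 'k"

definition pathalg :: "'v set \<Rightarrow> 'e set \<Rightarrow> ('e \<Rightarrow> 'v) \<Rightarrow> ('e \<Rightarrow> 'v) \<Rightarrow> ('v,'e,'k::zero) pelem set" where
  "pathalg Q0 Q1 s t = {a. \<forall>p. a p \<noteq> 0 \<longrightarrow> is_path Q0 Q1 s t p}"

definition pbasis :: "'v \<times> 'e list \<Rightarrow> ('v,'e,'k::{zero,one}) pelem" where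
  "pbasis p = (\<lambda>q. if q = p then 1 else 0)"

definition padd :: "('v,'e,'k::plus) pelem \<Rightarrow> ('v,'e,'k) pelem \<Rightarrow> ('v,'e,'k) pelem" where
  "padd a b = (\<lambda>p. a p + b p)"

definition psmult :: "'k::times \<Rightarrow> ('v,'e,'k) pelem \<Rightarrow> ('v,'e,'k) pelem" where
  "psmult c a = (\<lambda>p. c * a p)"

text \<open>Multiplication: for paths u, v the product u v is "first v, then u" (nonzero iff the
target of v is the source of u), so that a path u from x to y satisfies u = e_y u e_x.\<close>
definition pmult :: "'v set \<Rightarrow> 'e set \<Rightarrow> ('e \<Rightarrow> 'v) \<Rightarrow> ('e \<Rightarrow> 'v) \<Rightarrow>
    ('v,'e,'k::comm_ring_1) pelem \<Rightarrow> ('v,'e,'k) pelem \<Rightarrow> ('v,'e,'k) pelem" where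
  "pmult Q0 Q1 s t a b = (\<lambda>(x, as). if is_path Q0 Q1 s t (x, as) then
      (\<Sum>i\<le>length as. a (ptgt t (x, take i as), drop i as) * b (x, take i as)) else 0)"

definition pone :: "'v set \<Rightarrow> ('v,'e,'k::{zero,one}) pelem" where
  "pone Q0 = (\<lambda>p. if fst p \<in> Q0 \<and> snd p = [] then 1 else 0)"

text \<open>(kQ^+)^N: the span of the paths of length at least N.\<close>
definition arrow_ideal_pow :: "'v set \<Rightarrow> 'e set \<Rightarrow> ('e \<Rightarrow> 'v) \<Rightarrow> ('e \<Rightarrow> 'v) \<Rightarrow> nat \<Rightarrow> ('v,'e,'k::zero) pelem set" where
  "arrow_ideal_pow Q0 Q1 s t N = {a \<in> pathalg Q0 Q1 s t. \<forall>p. a p \<noteq> 0 \<longrightarrow> length (snd p) \<ge> N}"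

definition k_algebra :: "('k::field \<Rightarrow> 'a::ring_1 \<Rightarrow> 'a) \<Rightarrow> bool" where
  "k_algebra sc \<longleftrightarrow> vector_space sc \<and>
     (\<forall>c a b. sc c (a * b) = sc c a * b \<and> sc c (a * b) = a * sc c b)"

definition presentation :: "'v set \<Rightarrow> 'e set \<Rightarrow> ('e \<Rightarrow> 'v) \<Rightarrow> ('e \<Rightarrow> 'v) \<Rightarrow>
    ('k::field \<Rightarrow> 'a::ring_1 \<Rightarrow> 'a) \<Rightarrow> (('v,'e,'k) pelem \<Rightarrow> 'a) \<Rightarrow> bool" where
  "presentation Q0 Q1 s t sc \<nu> \<longleftrightarrow>
     (\<forall>a\<in>pathalg Q0 Q1 s t. \<forall>b\<in>pathalg Q0 Q1 s t.
        \<nu> (padd a b) = \<nu> a + \<nu> b \<and> \<nu> (pmult Q0 Q1 s t a b) = \<nu> a * \<nu> b) \<and>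
     (\<forall>c. \<forall>a\<in>pathalg Q0 Q1 s t. \<nu> (psmult c a) = sc c (\<nu> a)) \<and>
     \<nu> (pone Q0) = 1 \<and>
     \<nu> ` pathalg Q0 Q1 s t = UNIV"

definition pkernel :: "'v set \<Rightarrow> 'e set \<Rightarrow> ('e \<Rightarrow> 'v) \<Rightarrow> ('e \<Rightarrow> 'v) \<Rightarrow>
    (('v,'e,'k::zero) pelem \<Rightarrow> 'a::zero) \<Rightarrow> ('v,'e,'k) pelem set" where
  "pkernel Q0 Q1 s t \<nu> = {a \<in> pathalg Q0 Q1 s t. \<nu> a = 0}"

definition admissible :: "'v set \<Rightarrow> 'e set \<Rightarrow> ('e \<Rightarrow> 'v) \<Rightarrow> ('e \<Rightarrow> 'v) \<Rightarrow> ('v,'e,'k::zero) pelem set \<Rightarrow> bool" where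
  "admissible Q0 Q1 s t I \<longleftrightarrow> (\<exists>N\<ge>2. arrow_ideal_pow Q0 Q1 s t N \<subseteq> I \<and> I \<subseteq> arrow_ideal_pow Q0 Q1 s t 2)"

definition idem :: "(('v,'e,'k::{zero,one}) pelem \<Rightarrow> 'a) \<Rightarrow> 'v \<Rightarrow> 'a" where
  "idem \<nu> x = \<nu> (pbasis (x, []))"

definition constricted :: "'v set \<Rightarrow> 'e set \<Rightarrow> ('e \<Rightarrow> 'v) \<Rightarrow> ('e \<Rightarrow> 'v) \<Rightarrow>
    ('k::field \<Rightarrow> 'a::ring_1 \<Rightarrow> 'a) \<Rightarrow> (('v,'e,'k) pelem \<Rightarrow> 'a) \<Rightarrow> bool" where
  "constricted Q0 Q1 s t sc \<nu> \<longleftrightarrow>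
     (\<forall>\<alpha>\<in>Q1. vector_space.dim sc {idem \<nu> (t \<alpha>) * a * idem \<nu> (s \<alpha>) | a. True} = 1)"

definition minimal_relation :: "'v set \<Rightarrow> 'e set \<Rightarrow> ('e \<Rightarrow> 'v) \<Rightarrow> ('e \<Rightarrow> 'v) \<Rightarrow>
    ('v,'e,'k::zero) pelem set \<Rightarrow> ('v,'e,'k) pelem \<Rightarrow> bool" where
  "minimal_relation Q0 Q1 s t I \<rho> \<longleftrightarrow> \<rho> \<in> I \<and> \<rho> \<noteq> (\<lambda>_. 0) \<and>
     (\<forall>S. S \<noteq> {} \<and> S \<subset> {p. \<rho> p \<noteq> 0} \<longrightarrow> (\<lambda>p. if p \<in> S then \<rho> p else 0) \<notin> I)"

inductive homot :: "'v set \<Rightarrow> 'e set \<Rightarrow> ('e \<Rightarrow> 'v) \<Rightarrow> ('e \<Rightarrow> 'v) \<Rightarrow>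
    ('v,'e,'k::zero) pelem set \<Rightarrow> ('v,'e) walk \<Rightarrow> ('v,'e) walk \<Rightarrow> bool"
  for Q0 Q1 s t I where
  h_refl: "is_walk Q0 Q1 s t w \<Longrightarrow> homot Q0 Q1 s t I w w"
| h_sym: "homot Q0 Q1 s t I w w' \<Longrightarrow> homot Q0 Q1 s t I w' w"
| h_trans: "homot Q0 Q1 s t I w w' \<Longrightarrow> homot Q0 Q1 s t I w' w'' \<Longrightarrow> homot Q0 Q1 s t I w w''"
| h_inv1: "\<alpha> \<in> Q1 \<Longrightarrow> homot Q0 Q1 s t I (t \<alpha>, [(\<alpha>, False), (\<alpha>, True)]) (t \<alpha>, [])"
| h_inv2: "\<alpha> \<in> Q1 \<Longrightarrow> homot Q0 Q1 s t I (s \<alpha>, [(\<alpha>, True), (\<alpha>, False)]) (s \<alpha>, [])"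
| h_concat: "homot Q0 Q1 s t I w w' \<Longrightarrow> is_walk Q0 Q1 s t a \<Longrightarrow> is_walk Q0 Q1 s t b \<Longrightarrow>
     wtgt s t a = fst w \<Longrightarrow> wtgt s t w = fst b \<Longrightarrow>
     homot Q0 Q1 s t I (wconcat (wconcat a w) b) (wconcat (wconcat a w') b)"
| h_rel: "minimal_relation Q0 Q1 s t I \<rho> \<Longrightarrow> \<rho> u \<noteq> 0 \<Longrightarrow> \<rho> v \<noteq> 0 \<Longrightarrow>
     homot Q0 Q1 s t I (path_walk u) (path_walk v)"

definition hclass :: "'v set \<Rightarrow> 'e set \<Rightarrow> ('e \<Rightarrow> 'v) \<Rightarrow> ('e \<Rightarrow> 'v) \<Rightarrow>
    ('v,'e,'k::zero) pelem set \<Rightarrow> ('v,'e) walk \<Rightarrow> ('v,'e) walk set" where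
  "hclass Q0 Q1 s t I w = {w'. homot Q0 Q1 s t I w' w}"

text \<open>pi_1(Q,I) at the base vertex x0, as a HOL-Algebra monoid record (it is a group).\<close>
definition pi1 :: "'v set \<Rightarrow> 'e set \<Rightarrow> ('e \<Rightarrow> 'v) \<Rightarrow> ('e \<Rightarrow> 'v) \<Rightarrow>
    ('v,'e,'k::zero) pelem set \<Rightarrow> 'v \<Rightarrow> ('v,'e) walk set monoid" where
  "pi1 Q0 Q1 s t I x0 =
    \<lparr> carrier = {hclass Q0 Q1 s t I w | w. is_walk Q0 Q1 s t w \<and> fst w = x0 \<and> wtgt s t w = x0},
      mult = (\<lambda>X Y. {w. \<exists>a\<in>X. \<exists>b\<in>Y. homot Q0 Q1 s t I w (wconcat a b)}),
      one = hclass Q0 Q1 s t I (x0, []) \<rparr>"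

definition kplus :: "'k::ab_group_add monoid" where
  "kplus = \<lparr> carrier = UNIV, mult = (+), one = 0 \<rparr>"

definition Der0 :: "'v set \<Rightarrow> ('k::field \<Rightarrow> 'a::ring_1 \<Rightarrow> 'a) \<Rightarrow> (('v,'e,'k) pelem \<Rightarrow> 'a) \<Rightarrow> ('a \<Rightarrow> 'a) set" where
  "Der0 Q0 sc \<nu> = {D. (\<forall>a b. D (a + b) = D a + D b) \<and> (\<forall>c a. D (sc c a) = sc c (D a)) \<and>
      (\<forall>a b. D (a * b) = D a * b + a * D b) \<and> (\<forall>x\<in>Q0. D (idem \<nu> x) = 0)}"

definition Eset :: "'v set \<Rightarrow> ('k::field \<Rightarrow> 'a::ring_1 \<Rightarrow> 'a) \<Rightarrow> (('v,'e,'k) pelem \<Rightarrow> 'a) \<Rightarrow> 'a set" where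
  "Eset Q0 sc \<nu> = {\<Sum>x\<in>Q0. sc (c x) (idem \<nu> x) | c. True}"

definition Int0 :: "'v set \<Rightarrow> ('k::field \<Rightarrow> 'a::ring_1 \<Rightarrow> 'a) \<Rightarrow> (('v,'e,'k) pelem \<Rightarrow> 'a) \<Rightarrow> ('a \<Rightarrow> 'a) set" where
  "Int0 Q0 sc \<nu> = {(\<lambda>a. e * a - a * e) | e. e \<in> Eset Q0 sc \<nu>}"

definition der_class :: "'v set \<Rightarrow> ('k::field \<Rightarrow> 'a::ring_1 \<Rightarrow> 'a) \<Rightarrow> (('v,'e,'k) pelem \<Rightarrow> 'a) \<Rightarrow>
    ('a \<Rightarrow> 'a) \<Rightarrow> ('a \<Rightarrow> 'a) set" where
  "der_class Q0 sc \<nu> D = {D' \<in> Der0 Q0 sc \<nu>. (\<lambda>a. D' a - D a) \<in> Int0 Q0 sc \<nu>}"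

text \<open>HH^1(A) = Der_0(A)/Int_0(A), as the set of cosets.\<close>
definition HH1 :: "'v set \<Rightarrow> ('k::field \<Rightarrow> 'a::ring_1 \<Rightarrow> 'a) \<Rightarrow> (('v,'e,'k) pelem \<Rightarrow> 'a) \<Rightarrow> ('a \<Rightarrow> 'a) set set" where
  "HH1 Q0 sc \<nu> = der_class Q0 sc \<nu> ` Der0 Q0 sc \<nu>"

text \<open>theta_nu(f) is the class of the derivation f~ with
f~(nu(u)) = f([gamma_y^{-1} u gamma_x]) nu(u) for every path u from x to y
(the closed walk traverses gamma_x, then u, then gamma_y backwards).\<close>
definition theta :: "'v set \<Rightarrow> 'e set \<Rightarrow> ('e \<Rightarrow> 'v) \<Rightarrow> ('e \<Rightarrow> 'v) \<Rightarrow>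
    ('k::field \<Rightarrow> 'a::ring_1 \<Rightarrow> 'a) \<Rightarrow> (('v,'e,'k) pelem \<Rightarrow> 'a) \<Rightarrow> ('v \<Rightarrow> ('v,'e) walk) \<Rightarrow>
    (('v,'e) walk set \<Rightarrow> 'k) \<Rightarrow> ('a \<Rightarrow> 'a) set" where
  "theta Q0 Q1 s t sc \<nu> \<gamma> f =
     {D \<in> Der0 Q0 sc \<nu>. \<exists>D0 \<in> Der0 Q0 sc \<nu>.
        (\<forall>u. is_path Q0 Q1 s t u \<longrightarrow>
           D0 (\<nu> (pbasis u)) =
             sc (f (hclass Q0 Q1 s t (pkernel Q0 Q1 s t \<nu>)
                    (wconcat (wconcat (\<gamma> (fst u)) (path_walk u)) (winv s t (\<gamma> (ptgt t u))))))
                (\<nu> (pbasis u))) \<and>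
        (\<lambda>a. D a - D0 a) \<in> Int0 Q0 sc \<nu>}"

end

theory Submission
  imports Defs
begin

(* Write img u for the image in A of a path u.  A homomorphism f : pi_1(Q,I) -> k^+ gives the
   additive weight F u = f [gamma_y^-1 u gamma_x] on paths, which is constant on the support of
   every minimal relation because those paths are homotopic.  Every element of I is a sum of
   minimal relations, so multiplying coefficients by F preserves I and img u |-> F u img u is a
   well-defined derivation: this is theta f.  If theta f = theta g, the two derivations differ
   by an inner derivation [sum_x c_x e_x, -], which scales the arrow x -> y by c_y - c_x; so
   f - g is a coboundary on walks and vanishes on closed walks.  Conversely, if A is
   constricted, a derivation D in Der_0(A) maps img alpha into e_y A e_x = k img alpha, so D is
   diagonal on paths with an additive weight; D preserves I, hence this weight is constant on
   minimal relations and induces a homomorphism on pi_1(Q,I) whose image under theta is the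
   class of D.  Derivations that are diagonal on the same spanning set commute, so HH^1(A) is
   abelian. *)

lemma (in vector_space) dim_one_multiple:
  assumes "dim V = 1" "v \<in> V" "v \<noteq> 0" "w \<in> V"
  shows "\<exists>c. w = scale c v"
proof -
  obtain B where B: "V \<subseteq> span B" "card B = 1"
    using basis_exists[of V] assms(1) by metis
  then obtain \<beta> where "V \<subseteq> range (\<lambda>c. scale c \<beta>)"
    using span_singleton by (metis card_1_singletonE)
  then obtain c1 c2 where "v = scale c1 \<beta>" "w = scale c2 \<beta>"
    using assms(2,4) by blast
  moreover from this have "c1 \<noteq> 0" using assms(3) by auto
  ultimately have "w = scale (c2 / c1) v" by simp
  then show ?thesis ..
qed

section \<open>Paths and walks\<close>

lemma chain_append: "chain s t x (as @ bs) \<longleftrightarrow> chain s t x as \<and> chain s t (ptgt t (x, as)) bs"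
  by (induction as arbitrary: x) auto

lemma ptgt_append: "ptgt t (x, as @ bs) = ptgt t (ptgt t (x, as), bs)"
  by (cases bs rule: rev_cases) auto

lemma wtgt_append: "wtgt s t (x, as @ bs) = wtgt s t (wtgt s t (x, as), bs)"
  by (cases bs rule: rev_cases) auto

lemma fst_wconcat [simp]: "fst (wconcat w1 w2) = fst w1"
  by (simp add: wconcat_def)

lemma wtgt_wconcat: "fst w2 = wtgt s t w1 \<Longrightarrow> wtgt s t (wconcat w1 w2) = wtgt s t w2"
  by (cases w1, cases w2) (simp add: wconcat_def wtgt_append)

lemma wconcat_Nil_left: "fst w = x \<Longrightarrow> wconcat (x, []) w = w"
  by (cases w) (simp add: wconcat_def)

lemma wconcat_Nil_right: "wconcat w (y, []) = w"
  by (cases w) (simp add: wconcat_def)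

lemma winv_Nil [simp]: "winv s t (x, []) = (x, [])"
  by (simp add: winv_def)

lemma path_walk_append: "path_walk (fst p, snd p @ snd q) = wconcat (path_walk p) (path_walk q)"
  by (simp add: path_walk_def wconcat_def)

locale finite_quiver =
  fixes Q0 :: "'v set" and Q1 :: "'e set" and s t :: "'e \<Rightarrow> 'v"
  assumes quiv: "quiver Q0 Q1 s t"
begin

abbreviation "path \<equiv> is_path Q0 Q1 s t"
abbreviation "walk \<equiv> is_walk Q0 Q1 s t"

lemma finite_vertices: "finite Q0"
  and finite_arrows: "finite Q1"
  and arrow_ends: "\<alpha> \<in> Q1 \<Longrightarrow> s \<alpha> \<in> Q0 \<and> t \<alpha> \<in> Q0"
  using quiv by (auto simp: quiver_def)

lemma path_trivial: "x \<in> Q0 \<Longrightarrow> path (x, [])"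
  by (simp add: is_path_def)

lemma path_arrow: "\<alpha> \<in> Q1 \<Longrightarrow> path (s \<alpha>, [\<alpha>])"
  using arrow_ends by (simp add: is_path_def)

lemma path_fst: "path p \<Longrightarrow> fst p \<in> Q0"
  by (simp add: is_path_def)

lemma path_ptgt: "path p \<Longrightarrow> ptgt t p \<in> Q0"
proof (cases p)
  case (Pair x as)
  assume p: "path p"
  have "last as \<in> Q1" if "as \<noteq> []"
    using p that last_in_set[OF that] by (auto simp: Pair is_path_def)
  then show ?thesis
    using p arrow_ends[of "last as"] by (cases "as = []") (auto simp: Pair is_path_def)
qed

lemma path_append: "path (x, as @ bs) \<longleftrightarrow> path (x, as) \<and> path (ptgt t (x, as), bs)"
  using path_ptgt[of "(x, as)"] by (auto simp: is_path_def chain_append)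

lemma path_concat: "path p \<Longrightarrow> path q \<Longrightarrow> fst q = ptgt t p \<Longrightarrow> path (fst p, snd p @ snd q)"
  by (cases p, cases q) (simp add: path_append)

lemma length_path_less_card:
  assumes acyc: "acyclic_quiver Q0 Q1 s t" and p: "path (x, as)"
  shows "length as < card Q0"
proof -
  define vtx where "vtx i = ptgt t (x, take i as)" for i
  have no_repeat: "vtx i \<noteq> vtx j" if ij: "i < j" "j \<le> length as" for i j
  proof
    assume eq: "vtx i = vtx j"
    define cyc where "cyc = take (j - i) (drop i as)"
    have tj: "take j as = take i as @ cyc"
      using ij by (metis cyc_def le_add_diff_inverse less_imp_le_nat take_add)
    then have "as = take i as @ cyc @ drop j as"
      by (metis append.assoc append_take_drop_id)
    then have "path (x, take i as @ cyc @ drop j as)"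
      using p by simp
    then have "path (vtx i, cyc)"
      unfolding vtx_def path_append[of x] path_append[of _ cyc] by blast
    moreover have "ptgt t (vtx i, cyc) = vtx j"
      unfolding vtx_def tj ptgt_append ..
    moreover have "cyc \<noteq> []" using ij by (simp add: cyc_def)
    ultimately show False using acyc eq unfolding acyclic_quiver_def by auto
  qed
  have "inj_on vtx {0..length as}"
  proof (rule inj_onI)
    fix i j assume "i \<in> {0..length as}" "j \<in> {0..length as}" "vtx i = vtx j"
    then show "i = j" using no_repeat no_repeat[of j i] by (cases i j rule: linorder_cases) auto
  qed
  moreover have "vtx ` {0..length as} \<subseteq> Q0"
  proof
    fix y assume "y \<in> vtx ` {0..length as}"
    then obtain i where "y = vtx i" by blast
    moreover have "path (x, take i as)"
      using p path_append[of x "take i as" "drop i as"] by simp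
    ultimately show "y \<in> Q0" unfolding vtx_def by (metis path_ptgt)
  qed
  ultimately have "card {0..length as} \<le> card Q0"
    using card_image card_mono finite_vertices by metis
  then show ?thesis by simp
qed

lemma finite_paths: "acyclic_quiver Q0 Q1 s t \<Longrightarrow> finite {p. path p}"
proof -
  assume acyc: "acyclic_quiver Q0 Q1 s t"
  have "{p. path p} \<subseteq> Q0 \<times> {as. set as \<subseteq> Q1 \<and> length as \<le> card Q0}"
    using length_path_less_card[OF acyc] by (fastforce simp: is_path_def)
  moreover have "finite (Q0 \<times> {as. set as \<subseteq> Q1 \<and> length as \<le> card Q0})"
    using finite_vertices finite_arrows by (simp add: finite_lists_length_le)
  ultimately show ?thesis by (rule finite_subset)
qed

lemma walk_Nil: "walk (x, []) \<longleftrightarrow> x \<in> Q0"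
  by (simp add: is_walk_def)

lemma walk_Cons:
  "walk (x, st # sts) \<longleftrightarrow> fst st \<in> Q1 \<and> step_src s t st = x \<and> walk (step_tgt s t st, sts)"
  using arrow_ends[of "fst st"] by (cases st) (auto simp: is_walk_def)

lemma walk_fst: "walk w \<Longrightarrow> fst w \<in> Q0"
  by (simp add: is_walk_def)

lemma walk_append: "walk (x, as @ bs) \<longleftrightarrow> walk (x, as) \<and> walk (wtgt s t (x, as), bs)"
proof (induction as arbitrary: x)
  case Nil
  then show ?case by (auto simp: is_walk_def)
next
  case (Cons a as)
  then show ?case using arrow_ends[of "fst a"] by (cases a) (auto simp: walk_Cons walk_Nil)
qed

lemma walk_wtgt: "walk w \<Longrightarrow> wtgt s t w \<in> Q0"
  using walk_append[of "fst w" "snd w" "[]"] by (simp add: walk_Nil)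

lemma walk_wconcat: "walk w1 \<Longrightarrow> walk w2 \<Longrightarrow> fst w2 = wtgt s t w1 \<Longrightarrow> walk (wconcat w1 w2)"
  by (cases w1, cases w2) (simp add: wconcat_def walk_append)

lemma walk_arrow: "\<alpha> \<in> Q1 \<Longrightarrow> walk (s \<alpha>, [(\<alpha>, True)]) \<and> walk (t \<alpha>, [(\<alpha>, False)])"
  using arrow_ends by (simp add: walk_Cons walk_Nil)

lemma walk_winv:
  "walk w \<Longrightarrow> walk (winv s t w) \<and> fst (winv s t w) = wtgt s t w \<and> wtgt s t (winv s t w) = fst w"
proof (induction "snd w" arbitrary: w)
  case Nil
  then show ?case by (cases w) (simp add: winv_def)
next
  case (Cons st sts)
  obtain x where w: "w = (x, st # sts)" using Cons.hyps(2) by (metis prod.collapse)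
  obtain \<alpha> b where st: "st = (\<alpha>, b)" by (cases st)
  define y where "y = step_tgt s t st"
  have tail: "walk (y, sts)" and \<alpha>: "\<alpha> \<in> Q1" "step_src s t st = x"
    using Cons.prems by (auto simp: w walk_Cons st y_def)
  note IH = Cons.hyps(1)[of "(y, sts)", simplified, OF tail]
  have inv: "winv s t w = wconcat (winv s t (y, sts)) (y, [(\<alpha>, \<not> b)])"
    by (simp add: winv_def wconcat_def w st y_def wtgt_append[of _ _ _ "[_]", simplified])
  have last: "walk (y, [(\<alpha>, \<not> b)])" "wtgt s t (y, [(\<alpha>, \<not> b)]) = x"
    using \<alpha> arrow_ends[OF \<alpha>(1)] by (auto simp: walk_Cons walk_Nil st y_def)
  have "wtgt s t w = wtgt s t (y, sts)"
    using wtgt_append[of s t x "[st]" sts] by (simp add: w y_def)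
  moreover have "wtgt s t (winv s t w) = x"
    unfolding inv using IH last by (subst wtgt_wconcat) auto
  ultimately show ?case
    unfolding inv using IH last by (auto simp: w intro!: walk_wconcat)
qed

lemma winv_winv: "walk w \<Longrightarrow> winv s t (winv s t w) = w"
  using walk_winv[of w] by (cases w) (simp add: winv_def rev_map comp_def case_prod_beta)

lemma walk_path_walk:
  "path p \<Longrightarrow> walk (path_walk p) \<and> fst (path_walk p) = fst p \<and> wtgt s t (path_walk p) = ptgt t p"
proof (cases p)
  case (Pair x as)
  assume p: "path p"
  have "wchain s t y (map (\<lambda>a. (a, True)) bs)" if "chain s t y bs" for y bs
    using that by (induction bs arbitrary: y) auto
  moreover have "wtgt s t (x, map (\<lambda>a. (a, True)) as) = ptgt t (x, as)"
    by (cases as rule: rev_cases) auto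
  ultimately show ?thesis using p by (auto simp: Pair path_walk_def is_path_def is_walk_def)
qed

end


section \<open>The path algebra and its presentation\<close>

definition weighted :: "('p \<Rightarrow> 'k::times) \<Rightarrow> ('p \<Rightarrow> 'k) \<Rightarrow> 'p \<Rightarrow> 'k" where
  "weighted F a = (\<lambda>p. F p * a p)"

lemma weighted_padd: "weighted F (padd a b) = padd (weighted F a) (weighted F (b :: ('v,'e,'k::comm_ring_1) pelem))"
  by (simp add: weighted_def padd_def algebra_simps)

lemma weighted_psmult: "weighted F (psmult c a) = psmult c (weighted F (a :: ('v,'e,'k::comm_ring_1) pelem))"
  by (simp add: weighted_def psmult_def algebra_simps)

lemma weighted_pbasis: "weighted F (pbasis u) = psmult (F u) (pbasis u :: ('v,'e,'k::comm_ring_1) pelem)"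
  by (rule ext) (simp add: weighted_def psmult_def pbasis_def)

locale quiver_presentation = finite_quiver Q0 Q1 s t
  for Q0 :: "'v set" and Q1 :: "'e set" and s t :: "'e \<Rightarrow> 'v" +
  fixes sc :: "'k::field \<Rightarrow> 'a::ring_1 \<Rightarrow> 'a" and \<nu> :: "('v,'e,'k) pelem \<Rightarrow> 'a"
  assumes acyc: "acyclic_quiver Q0 Q1 s t"
    and alg: "k_algebra sc"
    and pres: "presentation Q0 Q1 s t sc \<nu>"
    and adm: "admissible Q0 Q1 s t (pkernel Q0 Q1 s t \<nu>)"
begin

sublocale vs: vector_space sc
  using alg by (simp add: k_algebra_def)

sublocale vsp: vector_space_pair sc sc ..

abbreviation "I \<equiv> pkernel Q0 Q1 s t \<nu>"
abbreviation kQ :: "('v,'e,'k) pelem set" where "kQ \<equiv> pathalg Q0 Q1 s t"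
abbreviation "pmul \<equiv> pmult Q0 Q1 s t"
abbreviation "img u \<equiv> \<nu> (pbasis u)"
abbreviation "e x \<equiv> idem \<nu> x"
abbreviation "klinear \<equiv> Vector_Spaces.linear sc sc"

lemma scale_mult_left: "sc c (a * b) = sc c a * b"
  and scale_mult_right: "sc c (a * b) = a * sc c b"
  using alg unfolding k_algebra_def by metis+

lemma mem_kQ_iff: "a \<in> kQ \<longleftrightarrow> (\<forall>p. a p \<noteq> 0 \<longrightarrow> path p)"
  by (simp add: pathalg_def)

lemma zero_mem_kQ [simp]: "(\<lambda>_. 0) \<in> kQ"
  and pbasis_mem_kQ [simp]: "path p \<Longrightarrow> pbasis p \<in> kQ"
  and pmult_mem_kQ [simp]: "pmul a b \<in> kQ"
  by (auto simp: mem_kQ_iff pbasis_def pmult_def split: if_splits)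

lemma padd_mem_kQ [simp]: "a \<in> kQ \<Longrightarrow> b \<in> kQ \<Longrightarrow> padd a b \<in> kQ"
  unfolding mem_kQ_iff padd_def by (metis add_0)

lemma weighted_mem_kQ [simp]: "a \<in> kQ \<Longrightarrow> weighted F a \<in> kQ"
  unfolding mem_kQ_iff weighted_def by (metis mult_zero_right)

lemma psmult_mem_kQ [simp]: "a \<in> kQ \<Longrightarrow> psmult c a \<in> kQ"
  unfolding mem_kQ_iff psmult_def by (metis mult_zero_right)

lemma restrict_mem_kQ [simp]: "a \<in> kQ \<Longrightarrow> (\<lambda>p. if P p then a p else 0) \<in> kQ"
  unfolding mem_kQ_iff by auto

lemma nu_add: "a \<in> kQ \<Longrightarrow> b \<in> kQ \<Longrightarrow> \<nu> (padd a b) = \<nu> a + \<nu> b"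
  and nu_mult: "a \<in> kQ \<Longrightarrow> b \<in> kQ \<Longrightarrow> \<nu> (pmul a b) = \<nu> a * \<nu> b"
  and nu_scale: "a \<in> kQ \<Longrightarrow> \<nu> (psmult c a) = sc c (\<nu> a)"
  using pres by (simp_all add: presentation_def)

lemma nu_surj: "\<exists>x\<in>kQ. \<nu> x = y"
proof -
  have "y \<in> \<nu> ` kQ" using pres by (simp add: presentation_def)
  then show ?thesis by blast
qed

lemma nu_zero [simp]: "\<nu> (\<lambda>_. 0) = 0"
  using nu_add[of "\<lambda>_. 0" "\<lambda>_. 0"] by (simp add: padd_def)

lemma nu_eq_sum_paths:
  assumes "a \<in> kQ"
  shows "\<nu> a = (\<Sum>p | path p. sc (a p) (img p))"
proof -
  have "\<nu> a = (\<Sum>p\<in>S. sc (a p) (img p))"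
    if "finite S" "S \<subseteq> {p. path p}" "\<forall>p. a p \<noteq> 0 \<longrightarrow> p \<in> S" for S a
    using that
  proof (induction S arbitrary: a rule: finite_induct)
    case empty
    then have "a = (\<lambda>_. 0)" by auto
    then show ?case by simp
  next
    case (insert p S)
    define a' where "a' = (\<lambda>q. if q = p then 0 else a q)"
    have a': "a' \<in> kQ" "\<forall>q. a' q \<noteq> 0 \<longrightarrow> q \<in> S"
      using insert.prems by (auto simp: mem_kQ_iff a'_def)
    have split: "a = padd a' (psmult (a p) (pbasis p))"
      by (auto simp: a'_def padd_def psmult_def pbasis_def)
    have "\<nu> a = \<nu> a' + sc (a p) (img p)"
      using a' insert.prems by (subst split, subst nu_add) (simp_all add: nu_scale)
    also have "\<nu> a' = (\<Sum>q\<in>S. sc (a' q) (img q))"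
      using insert a' by simp
    also have "\<dots> = (\<Sum>q\<in>S. sc (a q) (img q))"
      using insert.hyps by (intro sum.cong) (auto simp: a'_def)
    finally show ?case using insert.hyps by (simp add: add.commute)
  qed
  then show ?thesis using assms finite_paths[OF acyc] by (auto simp: mem_kQ_iff)
qed

lemma span_img_paths: "vs.span (img ` {p. path p}) = UNIV"
proof -
  have "y \<in> vs.span (img ` {p. path p})" for y
  proof -
    obtain a where a: "a \<in> kQ" "\<nu> a = y" using nu_surj by blast
    have "sc (a p) (img p) \<in> vs.span (img ` {p. path p})" if "path p" for p
      using that by (intro vs.span_scale vs.span_base) simp
    then have "(\<Sum>p | path p. sc (a p) (img p)) \<in> vs.span (img ` {p. path p})"
      by (intro vs.span_sum) simp
    then show ?thesis using a nu_eq_sum_paths by simp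
  qed
  then show ?thesis by blast
qed

lemma linear_eq_on_paths:
  assumes "klinear \<phi>" "klinear \<psi>" "\<And>u. path u \<Longrightarrow> \<phi> (img u) = \<psi> (img u)"
  shows "\<phi> = \<psi>"
proof
  fix y
  show "\<phi> y = \<psi> y"
    by (rule vsp.linear_eq_on_span[OF assms(1,2), of "img ` {p. path p}"])
      (auto simp: assms(3) span_img_paths)
qed

lemma mem_I_iff: "x \<in> I \<longleftrightarrow> x \<in> kQ \<and> \<nu> x = 0"
  by (simp add: pkernel_def)

lemma zero_mem_I: "(\<lambda>_. 0) \<in> I"
  and padd_mem_I: "x \<in> I \<Longrightarrow> y \<in> I \<Longrightarrow> padd x y \<in> I"
  and psmult_mem_I: "x \<in> I \<Longrightarrow> psmult c x \<in> I"
  and pmult_mem_I_left: "x \<in> I \<Longrightarrow> a \<in> kQ \<Longrightarrow> pmul a x \<in> I"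
  and pmult_mem_I_right: "x \<in> I \<Longrightarrow> a \<in> kQ \<Longrightarrow> pmul x a \<in> I"
  by (simp_all add: mem_I_iff nu_add nu_scale nu_mult)

lemma diff_mem_I:
  assumes "x \<in> kQ" "y \<in> kQ" "\<nu> x = \<nu> y"
  shows "(\<lambda>p. x p - y p) \<in> I"
proof -
  have d: "(\<lambda>p. x p - y p) \<in> kQ" using assms unfolding mem_kQ_iff by (metis diff_zero)
  have "x = padd (\<lambda>p. x p - y p) y" by (simp add: padd_def)
  then have "\<nu> x = \<nu> (\<lambda>p. x p - y p) + \<nu> y" using assms d by (metis nu_add)
  then show ?thesis using assms d by (simp add: mem_I_iff)
qed

lemma pmult_pbasis:
  assumes p: "path p" and q: "path q"
  shows "pmul (pbasis q :: ('v,'e,'k) pelem) (pbasis p) =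
    (if fst q = ptgt t p then pbasis (fst p, snd p @ snd q) else (\<lambda>_. 0))"
proof (rule ext)
  fix r :: "'v \<times> 'e list"
  obtain z as where r: "r = (z, as)" by (cases r)
  obtain x ps where p_eq: "p = (x, ps)" by (cases p)
  obtain y qs where q_eq: "q = (y, qs)" by (cases q)
  define m where "m = length ps"
  define C where "C \<longleftrightarrow> z = x \<and> take m as = ps \<and> y = ptgt t (x, ps) \<and> drop m as = qs"
  have summand: "(pbasis q (ptgt t (z, take i as), drop i as) * pbasis p (z, take i as) :: 'k) =
      (if i = m then (if C then 1 else 0) else 0)" if "i \<le> length as" for i
  proof (cases "i = m")
    case True
    then show ?thesis by (auto simp: pbasis_def p_eq q_eq C_def)
  next
    case False
    then have "(z, take i as) \<noteq> (x, ps)" using that by (auto simp: m_def)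
    then show ?thesis using False by (simp add: pbasis_def p_eq)
  qed
  have "(\<Sum>i\<le>length as. pbasis q (ptgt t (z, take i as), drop i as) * pbasis p (z, take i as) :: 'k)
      = (if m \<le> length as \<and> C then 1 else 0)"
    by (subst sum.cong[OF refl summand]) (auto simp: sum.delta)
  also have "m \<le> length as \<and> C \<longleftrightarrow> y = ptgt t (x, ps) \<and> z = x \<and> as = ps @ qs"
    unfolding C_def m_def by (metis append_eq_conv_conj append_take_drop_id length_append le_add1)
  finally have sum: "(\<Sum>i\<le>length as. pbasis q (ptgt t (z, take i as), drop i as) * pbasis p (z, take i as) :: 'k)
      = (if y = ptgt t (x, ps) \<and> z = x \<and> as = ps @ qs then 1 else 0)" .
  show "pmul (pbasis q :: ('v,'e,'k) pelem) (pbasis p) r =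
      (if fst q = ptgt t p then pbasis (fst p, snd p @ snd q) else (\<lambda>_. 0)) r"
  proof (cases "path (z, as)")
    case True
    then have "pmul (pbasis q :: ('v,'e,'k) pelem) (pbasis p) r =
        (\<Sum>i\<le>length as. pbasis q (ptgt t (z, take i as), drop i as) * pbasis p (z, take i as))"
      unfolding pmult_def r by (simp del: ptgt.simps)
    also have "\<dots> = (if y = ptgt t (x, ps) \<and> z = x \<and> as = ps @ qs then 1 else 0)"
      by (rule sum)
    finally show ?thesis by (auto simp: p_eq q_eq r pbasis_def)
  next
    case False
    then have "\<not> (y = ptgt t (x, ps) \<and> z = x \<and> as = ps @ qs)"
      using path_concat[OF p q] by (auto simp: p_eq q_eq)
    then show ?thesis using False unfolding pmult_def r by (auto simp: p_eq q_eq pbasis_def)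
  qed
qed

lemma img_mult: "path p \<Longrightarrow> path q \<Longrightarrow> fst q = ptgt t p \<Longrightarrow> img q * img p = img (fst p, snd p @ snd q)"
  and img_mult_zero: "path p \<Longrightarrow> path q \<Longrightarrow> fst q \<noteq> ptgt t p \<Longrightarrow> img q * img p = 0"
  using pmult_pbasis nu_mult by (metis pbasis_mem_kQ nu_zero)+

lemma idem_mult_img: "y \<in> Q0 \<Longrightarrow> path u \<Longrightarrow> e y * img u = (if y = ptgt t u then img u else 0)"
  unfolding idem_def using img_mult[of u "(y, [])"] img_mult_zero[of u "(y, [])"] path_trivial by auto

lemma img_mult_idem: "x \<in> Q0 \<Longrightarrow> path u \<Longrightarrow> img u * e x = (if x = fst u then img u else 0)"
  unfolding idem_def using img_mult[of "(x, [])" u] img_mult_zero[of "(x, [])" u] path_trivial by auto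

lemma pmult_idem_right:
  assumes "a \<in> kQ"
  shows "pmul a (pbasis (x, [])) = (\<lambda>r. if fst r = x then a r else 0)"
proof (rule ext)
  fix r :: "'v \<times> 'e list"
  obtain z as where r: "r = (z, as)" by (cases r)
  have "(\<Sum>i\<le>length as. a (ptgt t (z, take i as), drop i as) * pbasis (x, []) (z, take i as))
      = (\<Sum>i\<le>length as. if i = 0 then (if z = x then a (z, as) else 0) else 0)"
    by (rule sum.cong) (auto simp: pbasis_def)
  moreover have "\<not> path (z, as) \<Longrightarrow> a (z, as) = 0" using assms by (auto simp: mem_kQ_iff)
  ultimately show "pmul a (pbasis (x, [])) r = (if fst r = x then a r else 0)"
    unfolding pmult_def r by auto
qed

lemma pmult_idem_left:
  assumes "a \<in> kQ"
  shows "pmul (pbasis (y, [])) a = (\<lambda>r. if ptgt t r = y then a r else 0)"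
proof (rule ext)
  fix r :: "'v \<times> 'e list"
  obtain z as where r: "r = (z, as)" by (cases r)
  have "(\<Sum>i\<le>length as. pbasis (y, []) (ptgt t (z, take i as), drop i as) * a (z, take i as))
      = (\<Sum>i\<le>length as. if i = length as then (if ptgt t (z, as) = y then a (z, as) else 0) else 0)"
    by (rule sum.cong) (auto simp: pbasis_def)
  moreover have "\<not> path (z, as) \<Longrightarrow> a (z, as) = 0" using assms by (auto simp: mem_kQ_iff)
  ultimately show "pmul (pbasis (y, [])) a r = (if ptgt t r = y then a r else 0)"
    unfolding pmult_def r by auto
qed

lemma endpoint_restriction_mem_I:
  assumes "\<rho> \<in> I" "x \<in> Q0" "y \<in> Q0"
  shows "weighted (\<lambda>r. if fst r = x \<and> ptgt t r = y then 1 else 0) \<rho> \<in> I"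
proof -
  have \<rho>: "\<rho> \<in> kQ" using assms by (simp add: mem_I_iff)
  have "pmul (pbasis (y, [])) (pmul \<rho> (pbasis (x, []))) \<in> I"
    using assms path_trivial by (simp add: pmult_mem_I_left pmult_mem_I_right)
  also have "pmul (pbasis (y, [])) (pmul \<rho> (pbasis (x, []))) =
      weighted (\<lambda>r. if fst r = x \<and> ptgt t r = y then 1 else 0) \<rho>"
    using \<rho> by (auto simp: pmult_idem_right pmult_idem_left weighted_def)
  finally show ?thesis .
qed

section \<open>Weights and minimal relations\<close>

lemma finite_support: "x \<in> kQ \<Longrightarrow> finite {p. x p \<noteq> 0}"
  using finite_paths[OF acyc] by (rule finite_subset[rotated]) (auto simp: mem_kQ_iff)

lemma weighted_mem_I_if_const_on_minimal_relations:
  assumes const: "\<And>\<rho> u v. minimal_relation Q0 Q1 s t I \<rho> \<Longrightarrow> \<rho> u \<noteq> 0 \<Longrightarrow> \<rho> v \<noteq> 0 \<Longrightarrow> F u = F v"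
    and "x \<in> I"
  shows "weighted F x \<in> I"
  using \<open>x \<in> I\<close>
proof (induction "card {p. x p \<noteq> 0}" arbitrary: x rule: less_induct)
  case less
  have fin: "finite {p. x p \<noteq> 0}" using less.prems by (simp add: mem_I_iff finite_support)
  consider "x = (\<lambda>_. 0)" | "minimal_relation Q0 Q1 s t I x"
    | S where "S \<noteq> {}" "S \<subset> {p. x p \<noteq> 0}" "(\<lambda>p. if p \<in> S then x p else 0) \<in> I"
    using less.prems unfolding minimal_relation_def by blast
  then show ?case
  proof cases
    case 1
    then show ?thesis by (simp add: weighted_def zero_mem_I)
  next
    case 2
    then obtain u where u: "x u \<noteq> 0" unfolding minimal_relation_def by (meson ext)
    have "weighted F x = psmult (F u) x"
      using const[OF 2 _ u] by (intro ext) (metis weighted_def psmult_def mult_zero_right)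
    then show ?thesis using less.prems by (simp add: psmult_mem_I)
  next
    case (3 S)
    define x1 where "x1 = (\<lambda>p. if p \<in> S then x p else 0)"
    define x2 where "x2 = (\<lambda>p. if p \<notin> S then x p else 0)"
    have x: "x = padd x1 x2" by (rule ext) (simp add: x1_def x2_def padd_def)
    have x1: "x1 \<in> I" using 3 by (simp add: x1_def)
    have "x2 \<in> kQ" using less.prems by (simp add: x2_def mem_I_iff)
    then have x2: "x2 \<in> I"
      using less.prems x1 nu_add[of x1 x2] by (simp add: x[symmetric] mem_I_iff)
    have "{p. x1 p \<noteq> 0} = S" "{p. x2 p \<noteq> 0} = {p. x p \<noteq> 0} - S"
      using 3 by (auto simp: x1_def x2_def)
    then have "card {p. x1 p \<noteq> 0} < card {p. x p \<noteq> 0}" "card {p. x2 p \<noteq> 0} < card {p. x p \<noteq> 0}"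
      using 3 fin by (auto intro!: psubset_card_mono)
    then show ?thesis
      using less.hyps x1 x2 by (simp add: x weighted_padd padd_mem_I)
  qed
qed

lemma level_restriction_mem_I:
  assumes weighted_I: "\<And>x. x \<in> I \<Longrightarrow> weighted F x \<in> I" and "x \<in> I"
  shows "(\<lambda>p. if F p = \<mu> then x p else 0) \<in> I"
  using \<open>x \<in> I\<close>
proof (induction "card (F ` {p. x p \<noteq> 0})" arbitrary: x rule: less_induct)
  case less
  have fin: "finite {p. x p \<noteq> 0}" using less.prems by (simp add: mem_I_iff finite_support)
  show ?case
  proof (cases "\<exists>\<mu>' \<in> F ` {p. x p \<noteq> 0}. \<mu>' \<noteq> \<mu>")
    case False
    then have "(\<lambda>p. if F p = \<mu> then x p else 0) = x" by (intro ext) auto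
    then show ?thesis using less.prems by simp
  next
    case True
    then obtain \<mu>' where \<mu>': "\<mu>' \<in> F ` {p. x p \<noteq> 0}" "\<mu>' \<noteq> \<mu>" by blast
    \<comment> \<open>\<open>y\<close> has the same \<open>\<mu>\<close>-level part as \<open>x\<close> up to the factor \<open>\<mu> - \<mu>'\<close>, but kills the \<open>\<mu>'\<close>-level.\<close>
    define y where "y = padd (weighted F x) (psmult (- \<mu>') x)"
    have y: "y \<in> I" unfolding y_def using less.prems weighted_I by (intro padd_mem_I psmult_mem_I)
    have y_eq: "y p = (F p - \<mu>') * x p" for p
      by (simp add: y_def padd_def psmult_def weighted_def algebra_simps)
    have "F ` {p. y p \<noteq> 0} \<subseteq> F ` {p. x p \<noteq> 0} - {\<mu>'}"
      by (auto simp: y_eq)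
    then have "F ` {p. y p \<noteq> 0} \<subset> F ` {p. x p \<noteq> 0}"
      using \<mu>' by blast
    then have "card (F ` {p. y p \<noteq> 0}) < card (F ` {p. x p \<noteq> 0})"
      using fin by (intro psubset_card_mono) auto
    then have "psmult (inverse (\<mu> - \<mu>')) (\<lambda>p. if F p = \<mu> then y p else 0) \<in> I"
      using less.hyps y by (simp add: psmult_mem_I)
    also have "psmult (inverse (\<mu> - \<mu>')) (\<lambda>p. if F p = \<mu> then y p else 0) = (\<lambda>p. if F p = \<mu> then x p else 0)"
      using \<mu>'(2) by (intro ext) (simp add: psmult_def y_eq)
    finally show ?thesis .
  qed
qed

lemma const_on_minimal_relation_if_weighted_mem_I:
  assumes "\<And>x. x \<in> I \<Longrightarrow> weighted F x \<in> I"
    and \<rho>: "minimal_relation Q0 Q1 s t I \<rho>" and u: "\<rho> u \<noteq> 0" and v: "\<rho> v \<noteq> 0"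
  shows "F v = F u"
proof (rule ccontr)
  assume "F v \<noteq> F u"
  define S where "S = {p. \<rho> p \<noteq> 0 \<and> F p = F u}"
  have "S \<noteq> {}" "S \<subset> {p. \<rho> p \<noteq> 0}"
    using u v \<open>F v \<noteq> F u\<close> unfolding S_def by blast+
  then have "(\<lambda>p. if p \<in> S then \<rho> p else 0) \<notin> I"
    using \<rho> by (simp add: minimal_relation_def)
  moreover have "(\<lambda>p. if p \<in> S then \<rho> p else 0) = (\<lambda>p. if F p = F u then \<rho> p else 0)"
    by (rule ext) (simp add: S_def)
  moreover have "(\<lambda>p. if F p = F u then \<rho> p else 0) \<in> I"
    using level_restriction_mem_I[OF assms(1)] \<rho> by (simp add: minimal_relation_def)
  ultimately show False by simp
qed

lemma minimal_relation_support_path: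
  "minimal_relation Q0 Q1 s t I \<rho> \<Longrightarrow> \<rho> u \<noteq> 0 \<Longrightarrow> path u"
  unfolding minimal_relation_def mem_I_iff mem_kQ_iff by blast

lemma minimal_relation_parallel:
  assumes \<rho>: "minimal_relation Q0 Q1 s t I \<rho>" and u: "\<rho> u \<noteq> 0" and v: "\<rho> v \<noteq> 0"
  shows "fst v = fst u \<and> ptgt t v = ptgt t u"
proof -
  define F :: "'v \<times> 'e list \<Rightarrow> 'k" where "F r = (if fst r = fst u \<and> ptgt t r = ptgt t u then 1 else 0)" for r
  have "path u" using \<rho> u by (rule minimal_relation_support_path)
  then have "weighted F x \<in> I" if "x \<in> I" for x
    unfolding F_def using that by (intro endpoint_restriction_mem_I path_fst path_ptgt)
  then have "F v = F u" by (rule const_on_minimal_relation_if_weighted_mem_I[OF _ \<rho> u v])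
  then show ?thesis by (simp add: F_def split: if_splits)
qed

section \<open>Homotopy of walks\<close>

abbreviation homotopic :: "('v,'e) walk \<Rightarrow> ('v,'e) walk \<Rightarrow> bool" (infix "\<simeq>" 50)
  where "w \<simeq> w' \<equiv> homot Q0 Q1 s t I w w'"

lemma homotopic_walks: "w \<simeq> w' \<Longrightarrow> walk w \<and> walk w' \<and> fst w = fst w' \<and> wtgt s t w = wtgt s t w'"
proof (induction rule: homot.induct)
  case (h_inv1 \<alpha>)
  then show ?case using arrow_ends[of \<alpha>] by (auto simp: is_walk_def)
next
  case (h_inv2 \<alpha>)
  then show ?case using arrow_ends[of \<alpha>] by (auto simp: is_walk_def)
next
  case (h_concat w w' a b)
  then have "wtgt s t (wconcat a w) = wtgt s t w" "wtgt s t (wconcat a w') = wtgt s t w'"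
    by (simp_all add: wtgt_wconcat)
  with h_concat show ?case by (auto intro!: walk_wconcat simp: wtgt_wconcat)
next
  case (h_rel \<rho> u v)
  then have "path u" "path v"
    by (simp_all add: minimal_relation_support_path)
  then show ?case
    using minimal_relation_parallel[OF h_rel] walk_path_walk[of u] walk_path_walk[of v] by simp
qed auto

lemma homotopic_wconcat:
  assumes h1: "a \<simeq> a'" and h2: "b \<simeq> b'" and j: "wtgt s t a = fst b"
  shows "wconcat a b \<simeq> wconcat a' b'"
proof -
  note p1 = homotopic_walks[OF h1] and p2 = homotopic_walks[OF h2]
  have "wconcat (wconcat (fst a, []) a) b \<simeq> wconcat (wconcat (fst a, []) a') b"
    using p1 p2 j by (intro h_concat h1) (auto simp: walk_Nil walk_fst)
  then have left: "wconcat a b \<simeq> wconcat a' b" using p1 by (simp add: wconcat_Nil_left)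
  have "wtgt s t (wconcat a' b) = wtgt s t b" using p1 j by (simp add: wtgt_wconcat)
  then have "wconcat (wconcat a' b) (wtgt s t b, []) \<simeq> wconcat (wconcat a' b') (wtgt s t b, [])"
    using p1 p2 j by (intro h_concat h2) (auto simp: walk_Nil walk_wtgt)
  then have "wconcat a' b \<simeq> wconcat a' b'" by (simp add: wconcat_Nil_right)
  with left show ?thesis by (rule h_trans)
qed

lemma homotopic_wconcat_winv: "walk w \<Longrightarrow> wconcat w (winv s t w) \<simeq> (fst w, [])"
proof (induction "snd w" arbitrary: w)
  case Nil
  then show ?case by (cases w) (simp add: wconcat_def h_refl walk_Nil walk_fst)
next
  case (Cons st sts)
  obtain x where w: "w = (x, st # sts)" using Cons.hyps(2) by (metis prod.collapse)
  obtain \<alpha> b where st: "st = (\<alpha>, b)" by (cases st)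
  define y where "y = step_tgt s t st"
  have tail: "walk (y, sts)" and \<alpha>: "\<alpha> \<in> Q1" "step_src s t st = x"
    using Cons.prems by (auto simp: w walk_Cons st y_def)
  have y: "y \<in> Q0" using tail walk_fst by force
  have step: "walk (x, [st])" and step_back: "walk (y, [(\<alpha>, \<not> b)])"
    using \<alpha> y arrow_ends[OF \<alpha>(1)] by (auto simp: walk_Cons walk_Nil st y_def)
  have "wconcat (wconcat (x, [st]) (wconcat (y, sts) (winv s t (y, sts)))) (y, [(\<alpha>, \<not> b)])
      \<simeq> wconcat (wconcat (x, [st]) (y, [])) (y, [(\<alpha>, \<not> b)])"
    using step step_back walk_winv[OF tail] tail Cons.hyps(1)[of "(y, sts)"]
    by (intro h_concat) (auto simp: y_def wtgt_wconcat)
  moreover have "wconcat (wconcat (x, [st]) (wconcat (y, sts) (winv s t (y, sts)))) (y, [(\<alpha>, \<not> b)])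
      = wconcat w (winv s t w)"
    by (simp add: w winv_def wconcat_def st)
  moreover have "(x, [(\<alpha>, b), (\<alpha>, \<not> b)]) \<simeq> (x, [])"
    using \<alpha> h_inv1[of \<alpha>] h_inv2[of \<alpha>] by (cases b) (auto simp: st)
  ultimately show ?case using w st by (simp add: wconcat_def) (metis h_trans)
qed

lemma homotopic_winv_wconcat: "walk w \<Longrightarrow> wconcat (winv s t w) w \<simeq> (wtgt s t w, [])"
  using homotopic_wconcat_winv[of "winv s t w"] walk_winv[of w] winv_winv[of w] by simp

lemma hclass_eq: "w \<simeq> w' \<Longrightarrow> hclass Q0 Q1 s t I w = hclass Q0 Q1 s t I w'"
  unfolding hclass_def by (blast intro: h_trans h_sym)

lemma mem_hclass_iff: "w' \<in> hclass Q0 Q1 s t I w \<longleftrightarrow> w' \<simeq> w"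
  by (simp add: hclass_def)

lemma mem_hclass_self: "walk w \<Longrightarrow> w \<in> hclass Q0 Q1 s t I w"
  by (simp add: hclass_def h_refl)

section \<open>Derivations\<close>

lemma klinearI:
  "(\<And>x y. \<phi> (x + y) = \<phi> x + \<phi> y) \<Longrightarrow> (\<And>c x. \<phi> (sc c x) = sc c (\<phi> x)) \<Longrightarrow> klinear \<phi>"
  using alg by (simp add: Vector_Spaces.linear_iff k_algebra_def)

lemma Der0_linear: "D \<in> Der0 Q0 sc \<nu> \<Longrightarrow> klinear D"
  and Der0_Leibniz: "D \<in> Der0 Q0 sc \<nu> \<Longrightarrow> D (a * b) = D a * b + a * D b"
  and Der0_idem: "D \<in> Der0 Q0 sc \<nu> \<Longrightarrow> x \<in> Q0 \<Longrightarrow> D (e x) = 0"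
  by (simp_all add: Der0_def klinearI)

lemma Der0I:
  assumes "klinear D" "\<And>a b. D (a * b) = D a * b + a * D b" "\<And>x. x \<in> Q0 \<Longrightarrow> D (e x) = 0"
  shows "D \<in> Der0 Q0 sc \<nu>"
  using assms by (simp add: Der0_def vsp.linear_add vsp.linear_scale)

lemma Der0_add: "D1 \<in> Der0 Q0 sc \<nu> \<Longrightarrow> D2 \<in> Der0 Q0 sc \<nu> \<Longrightarrow> (\<lambda>a. D1 a + D2 a) \<in> Der0 Q0 sc \<nu>"
  by (rule Der0I) (simp_all add: vsp.linear_compose_add Der0_linear Der0_Leibniz Der0_idem algebra_simps)

lemma Der0_scale: "D \<in> Der0 Q0 sc \<nu> \<Longrightarrow> (\<lambda>a. sc c (D a)) \<in> Der0 Q0 sc \<nu>"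
  by (rule Der0I) (simp_all add: vsp.linear_compose_scale_right Der0_linear Der0_Leibniz Der0_idem
      vs.scale_right_distrib scale_mult_left[symmetric] scale_mult_right[symmetric])

definition idem_comb :: "('v \<Rightarrow> 'k) \<Rightarrow> 'a" where
  "idem_comb c = (\<Sum>x\<in>Q0. sc (c x) (e x))"

lemma Int0_iff: "\<phi> \<in> Int0 Q0 sc \<nu> \<longleftrightarrow> (\<exists>c. \<phi> = (\<lambda>a. idem_comb c * a - a * idem_comb c))"
  by (auto simp: Int0_def Eset_def idem_comb_def)

lemma zero_mem_Int0: "(\<lambda>a. 0) \<in> Int0 Q0 sc \<nu>"
  unfolding Int0_iff by (rule exI[of _ "\<lambda>_. 0"]) (simp add: idem_comb_def)

lemma Int0_add:
  assumes "\<phi> \<in> Int0 Q0 sc \<nu>" "\<psi> \<in> Int0 Q0 sc \<nu>"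
  shows "(\<lambda>a. \<phi> a + \<psi> a) \<in> Int0 Q0 sc \<nu>"
proof -
  obtain c d where "\<phi> = (\<lambda>a. idem_comb c * a - a * idem_comb c)" "\<psi> = (\<lambda>a. idem_comb d * a - a * idem_comb d)"
    using assms unfolding Int0_iff by blast
  moreover have "idem_comb (\<lambda>x. c x + d x) = idem_comb c + idem_comb d"
    by (simp add: idem_comb_def vs.scale_left_distrib sum.distrib)
  ultimately show ?thesis
    unfolding Int0_iff by (intro exI[of _ "\<lambda>x. c x + d x"]) (simp add: algebra_simps)
qed

lemma Int0_scale:
  assumes "\<phi> \<in> Int0 Q0 sc \<nu>"
  shows "(\<lambda>a. sc k (\<phi> a)) \<in> Int0 Q0 sc \<nu>"
proof -
  obtain c where "\<phi> = (\<lambda>a. idem_comb c * a - a * idem_comb c)"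
    using assms unfolding Int0_iff by blast
  moreover have "idem_comb (\<lambda>x. k * c x) = sc k (idem_comb c)"
    by (simp add: idem_comb_def vs.scale_sum_right)
  moreover have "sc k (idem_comb c * a - a * idem_comb c) = sc k (idem_comb c) * a - a * sc k (idem_comb c)" for a
    by (simp only: vs.scale_right_diff_distrib scale_mult_left[of k _ a] scale_mult_right[of k a])
  ultimately show ?thesis
    unfolding Int0_iff by (intro exI[of _ "\<lambda>x. k * c x"]) simp
qed

lemma Int0_diff:
  "\<phi> \<in> Int0 Q0 sc \<nu> \<Longrightarrow> \<psi> \<in> Int0 Q0 sc \<nu> \<Longrightarrow> (\<lambda>a. \<phi> a - \<psi> a) \<in> Int0 Q0 sc \<nu>"
  using Int0_add[of \<phi> "\<lambda>a. sc (-1) (\<psi> a)"] Int0_scale[of \<psi> "-1"] by simp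

lemma klinear_commutator: "klinear (\<lambda>a. E * a - a * E)"
proof (rule klinearI)
  show "E * sc c a - sc c a * E = sc c (E * a - a * E)" for c a
    by (simp only: vs.scale_right_diff_distrib scale_mult_right[of c E] scale_mult_left[of c _ E])
qed (simp add: algebra_simps)

lemma idem_comb_commutator_img:
  assumes u: "path u"
  shows "idem_comb c * img u - img u * idem_comb c = sc (c (ptgt t u) - c (fst u)) (img u)"
proof -
  have "idem_comb c * img u = (\<Sum>x\<in>Q0. sc (c x) (e x * img u))"
    by (simp add: idem_comb_def sum_distrib_right scale_mult_left)
  also have "\<dots> = sc (c (ptgt t u)) (img u)"
    using u path_ptgt[OF u] finite_vertices by (simp add: idem_mult_img if_distrib sum.delta' cong: if_cong)
  finally have left: "idem_comb c * img u = sc (c (ptgt t u)) (img u)" .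
  have "img u * idem_comb c = (\<Sum>x\<in>Q0. sc (c x) (img u * e x))"
    by (simp add: idem_comb_def sum_distrib_left scale_mult_right)
  also have "\<dots> = sc (c (fst u)) (img u)"
    using u path_fst[OF u] finite_vertices by (simp add: img_mult_idem if_distrib sum.delta' cong: if_cong)
  finally have right: "img u * idem_comb c = sc (c (fst u)) (img u)" .
  show ?thesis unfolding left right by (simp add: vs.scale_left_diff_distrib)
qed

lemma der_class_self: "D \<in> Der0 Q0 sc \<nu> \<Longrightarrow> D \<in> der_class Q0 sc \<nu> D"
  by (simp add: der_class_def zero_mem_Int0)

lemma der_class_eq:
  assumes "(\<lambda>a. D a - D' a) \<in> Int0 Q0 sc \<nu>"
  shows "der_class Q0 sc \<nu> D = der_class Q0 sc \<nu> D'"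
proof -
  have "(\<lambda>a. E a - D a) \<in> Int0 Q0 sc \<nu> \<longleftrightarrow> (\<lambda>a. E a - D' a) \<in> Int0 Q0 sc \<nu>" for E
    using Int0_add[OF _ assms, of "\<lambda>a. E a - D a"] Int0_diff[OF _ assms, of "\<lambda>a. E a - D' a"] by auto
  then show ?thesis by (simp add: der_class_def)
qed

lemma weighted_pmult:
  assumes additive: "\<And>p q. path p \<Longrightarrow> path q \<Longrightarrow> fst q = ptgt t p \<Longrightarrow> F (fst p, snd p @ snd q) = F p + F q"
  shows "weighted F (pmul x y) = padd (pmul (weighted F x) y) (pmul x (weighted F y))"
proof (rule ext)
  fix r :: "'v \<times> 'e list"
  obtain z as where r: "r = (z, as)" by (cases r)
  show "weighted F (pmul x y) r = padd (pmul (weighted F x) y) (pmul x (weighted F y)) r"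
  proof (cases "path (z, as)")
    case False
    then show ?thesis by (simp add: r weighted_def padd_def pmult_def)
  next
    case True
    have summand: "F (z, as) * (x (ptgt t (z, take i as), drop i as) * y (z, take i as)) =
        F (ptgt t (z, take i as), drop i as) * x (ptgt t (z, take i as), drop i as) * y (z, take i as) +
        x (ptgt t (z, take i as), drop i as) * (F (z, take i as) * y (z, take i as))" for i
    proof -
      have "F (z, as) = F (ptgt t (z, take i as), drop i as) + F (z, take i as)"
        using True additive[of "(z, take i as)" "(ptgt t (z, take i as), drop i as)"]
          path_append[of z "take i as" "drop i as"] by (simp add: add.commute)
      then show ?thesis by (simp add: algebra_simps)
    qed
    show ?thesis
      unfolding r weighted_def padd_def pmult_def using True
      by (simp del: ptgt.simps add: sum_distrib_left summand sum.distrib)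
  qed
qed

text \<open>The preimage under \<open>\<nu>\<close> is arbitrary; \<open>weight_der_nu\<close> shows that it does not matter.\<close>

definition weight_der :: "('v \<times> 'e list \<Rightarrow> 'k) \<Rightarrow> 'a \<Rightarrow> 'a" where
  "weight_der F a = \<nu> (weighted F (SOME x. x \<in> kQ \<and> \<nu> x = a))"

lemma weight_der_nu:
  assumes const: "\<And>\<rho> u v. minimal_relation Q0 Q1 s t I \<rho> \<Longrightarrow> \<rho> u \<noteq> 0 \<Longrightarrow> \<rho> v \<noteq> 0 \<Longrightarrow> F u = F v"
    and x: "x \<in> kQ"
  shows "weight_der F (\<nu> x) = \<nu> (weighted F x)"
proof -
  define y where "y = (SOME y. y \<in> kQ \<and> \<nu> y = \<nu> x)"
  have y: "y \<in> kQ \<and> \<nu> y = \<nu> x" unfolding y_def by (rule someI[of _ x]) (simp add: x)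
  then have d: "(\<lambda>p. y p - x p) \<in> I" using x diff_mem_I by blast
  have "weighted F y = padd (weighted F (\<lambda>p. y p - x p)) (weighted F x)"
    by (rule ext) (simp add: weighted_def padd_def algebra_simps)
  moreover have "weighted F (\<lambda>p. y p - x p) \<in> I"
    using weighted_mem_I_if_const_on_minimal_relations[OF const d] .
  ultimately have "\<nu> (weighted F y) = \<nu> (weighted F x)"
    using x by (simp add: nu_add mem_I_iff)
  then show ?thesis unfolding weight_der_def y_def[symmetric] .
qed

lemma klinear_weight_der:
  assumes const: "\<And>\<rho> u v. minimal_relation Q0 Q1 s t I \<rho> \<Longrightarrow> \<rho> u \<noteq> 0 \<Longrightarrow> \<rho> v \<noteq> 0 \<Longrightarrow> F u = F v"
  shows "klinear (weight_der F)"
proof (rule klinearI)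
  note nu = weight_der_nu[OF const]
  fix a b
  obtain x y where xy: "x \<in> kQ" "a = \<nu> x" "y \<in> kQ" "b = \<nu> y" using nu_surj by metis
  then have "a + b = \<nu> (padd x y)" by (simp add: nu_add)
  then have "weight_der F (a + b) = \<nu> (weighted F (padd x y))"
    using xy by (simp add: nu)
  then show "weight_der F (a + b) = weight_der F a + weight_der F b"
    using xy by (simp add: nu weighted_padd nu_add)
next
  note nu = weight_der_nu[OF const]
  fix c a
  obtain x where x: "x \<in> kQ" "a = \<nu> x" using nu_surj by metis
  then have "sc c a = \<nu> (psmult c x)" by (simp add: nu_scale)
  then have "weight_der F (sc c a) = \<nu> (weighted F (psmult c x))"
    using x by (simp add: nu)
  then show "weight_der F (sc c a) = sc c (weight_der F a)"
    using x by (simp add: nu weighted_psmult nu_scale)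
qed

lemma weight_der_Der0:
  assumes additive: "\<And>p q. path p \<Longrightarrow> path q \<Longrightarrow> fst q = ptgt t p \<Longrightarrow> F (fst p, snd p @ snd q) = F p + F q"
    and const: "\<And>\<rho> u v. minimal_relation Q0 Q1 s t I \<rho> \<Longrightarrow> \<rho> u \<noteq> 0 \<Longrightarrow> \<rho> v \<noteq> 0 \<Longrightarrow> F u = F v"
  shows "weight_der F \<in> Der0 Q0 sc \<nu>"
proof (rule Der0I)
  show "klinear (weight_der F)" using klinear_weight_der[OF const] .
next
  note nu = weight_der_nu[OF const]
  fix a b
  obtain x y where xy: "x \<in> kQ" "a = \<nu> x" "y \<in> kQ" "b = \<nu> y" using nu_surj by metis
  then have "a * b = \<nu> (pmul x y)" by (simp add: nu_mult)
  then have "weight_der F (a * b) = \<nu> (weighted F (pmul x y))"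
    by (simp add: nu)
  then show "weight_der F (a * b) = weight_der F a * b + a * weight_der F b"
    using xy by (simp add: nu weighted_pmult[OF additive] nu_add nu_mult)
next
  note nu = weight_der_nu[OF const]
  fix x assume x: "x \<in> Q0"
  have "F (x, [] @ []) = F (x, []) + F (x, [])"
    using additive[of "(x, [])" "(x, [])"] path_trivial[OF x] by simp
  then have "F (x, []) = 0" by (simp only: append_Nil add_cancel_right_right)
  then show "weight_der F (e x) = 0"
    using x by (simp add: idem_def nu path_trivial weighted_pbasis nu_scale)
qed

lemma weight_der_img:
  assumes "\<And>\<rho> u v. minimal_relation Q0 Q1 s t I \<rho> \<Longrightarrow> \<rho> u \<noteq> 0 \<Longrightarrow> \<rho> v \<noteq> 0 \<Longrightarrow> F u = F v"
    and "path u"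
  shows "weight_der F (img u) = sc (F u) (img u)"
  using assms(2) by (simp add: weight_der_nu[OF assms(1)] weighted_pbasis nu_scale)

lemma nu_weighted:
  assumes D: "klinear D" and diag: "\<And>u. path u \<Longrightarrow> D (img u) = sc (F u) (img u)" and x: "x \<in> kQ"
  shows "\<nu> (weighted F x) = D (\<nu> x)"
proof -
  have "\<nu> (weighted F x) = (\<Sum>p | path p. sc (F p * x p) (img p))"
    using nu_eq_sum_paths[OF weighted_mem_kQ[OF x]] by (simp add: weighted_def)
  also have "\<dots> = (\<Sum>p | path p. sc (x p) (D (img p)))"
    by (rule sum.cong) (simp_all add: diag mult.commute)
  also have "\<dots> = D (\<nu> x)"
    unfolding nu_eq_sum_paths[OF x] by (simp add: vsp.linear_sum[OF D] vsp.linear_scale[OF D])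
  finally show ?thesis .
qed

lemma img_arrow_nonzero:
  assumes "\<alpha> \<in> Q1"
  shows "img (s \<alpha>, [\<alpha>]) \<noteq> 0"
proof
  assume "img (s \<alpha>, [\<alpha>]) = 0"
  then have "pbasis (s \<alpha>, [\<alpha>]) \<in> I"
    using path_arrow[OF assms] by (simp add: mem_I_iff)
  moreover have "I \<subseteq> arrow_ideal_pow Q0 Q1 s t 2"
    using adm unfolding admissible_def by blast
  ultimately have "\<forall>p. (pbasis (s \<alpha>, [\<alpha>]) :: ('v,'e,'k) pelem) p \<noteq> 0 \<longrightarrow> 2 \<le> length (snd p)"
    by (auto simp: arrow_ideal_pow_def)
  from this[rule_format, of "(s \<alpha>, [\<alpha>])"] show False
    by (simp add: pbasis_def)
qed

lemma der_img_arrow_eigen: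
  assumes constr: "constricted Q0 Q1 s t sc \<nu>" and D: "D \<in> Der0 Q0 sc \<nu>" and \<alpha>: "\<alpha> \<in> Q1"
  shows "\<exists>c. D (img (s \<alpha>, [\<alpha>])) = sc c (img (s \<alpha>, [\<alpha>]))"
proof -
  define V where "V = {e (t \<alpha>) * a * e (s \<alpha>) | a. True}"
  define v where "v = img (s \<alpha>, [\<alpha>])"
  have ends: "s \<alpha> \<in> Q0" "t \<alpha> \<in> Q0" using arrow_ends[OF \<alpha>] by auto
  have v: "e (t \<alpha>) * v * e (s \<alpha>) = v"
    unfolding v_def using idem_mult_img[OF ends(2) path_arrow[OF \<alpha>]]
      img_mult_idem[OF ends(1) path_arrow[OF \<alpha>]] by simp
  have "D v = D (e (t \<alpha>) * (v * e (s \<alpha>)))"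
    using v by (simp add: mult.assoc)
  also have "\<dots> = e (t \<alpha>) * D v * e (s \<alpha>)"
    using D ends by (simp add: Der0_Leibniz Der0_idem mult.assoc)
  finally have "D v \<in> V" "v \<in> V"
    unfolding V_def using v[symmetric] by blast+
  moreover have "vs.dim V = 1" using constr \<alpha> unfolding constricted_def V_def by blast
  ultimately show ?thesis
    using vs.dim_one_multiple img_arrow_nonzero[OF \<alpha>] unfolding v_def by blast
qed

definition arrow_weight :: "('a \<Rightarrow> 'a) \<Rightarrow> 'e \<Rightarrow> 'k" where
  "arrow_weight D \<alpha> = (SOME c. D (img (s \<alpha>, [\<alpha>])) = sc c (img (s \<alpha>, [\<alpha>])))"

definition path_weight :: "('a \<Rightarrow> 'a) \<Rightarrow> 'v \<times> 'e list \<Rightarrow> 'k" where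
  "path_weight D p = sum_list (map (arrow_weight D) (snd p))"

lemma der_img_path:
  assumes constr: "constricted Q0 Q1 s t sc \<nu>" and D: "D \<in> Der0 Q0 sc \<nu>" and u: "path u"
  shows "D (img u) = sc (path_weight D u) (img u)"
proof -
  obtain x as where u_eq: "u = (x, as)" by (cases u)
  have "path (x, as) \<Longrightarrow> D (img (x, as)) = sc (path_weight D (x, as)) (img (x, as))"
  proof (induction as rule: rev_induct)
    case Nil
    then show ?case using Der0_idem[OF D] by (simp add: path_weight_def idem_def is_path_def)
  next
    case (snoc \<alpha> as)
    have p: "path (x, as)" and "path (ptgt t (x, as), [\<alpha>])"
      using snoc.prems path_append by auto
    then have \<alpha>: "\<alpha> \<in> Q1" "s \<alpha> = ptgt t (x, as)"
      by (auto simp: is_path_def)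
    have arrow: "D (img (s \<alpha>, [\<alpha>])) = sc (arrow_weight D \<alpha>) (img (s \<alpha>, [\<alpha>]))"
      unfolding arrow_weight_def using der_img_arrow_eigen[OF constr D \<alpha>(1)] by (rule someI_ex)
    have prod: "img (s \<alpha>, [\<alpha>]) * img (x, as) = img (x, as @ [\<alpha>])"
      using img_mult[OF p path_arrow[OF \<alpha>(1)]] \<alpha>(2) by simp
    have "D (img (x, as @ [\<alpha>])) = D (img (s \<alpha>, [\<alpha>]) * img (x, as))"
      by (simp add: prod)
    also have "\<dots> = D (img (s \<alpha>, [\<alpha>])) * img (x, as) + img (s \<alpha>, [\<alpha>]) * D (img (x, as))"
      by (rule Der0_Leibniz[OF D])
    also have "\<dots> = sc (arrow_weight D \<alpha> + path_weight D (x, as)) (img (x, as @ [\<alpha>]))"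
      unfolding arrow snoc.IH[OF p] scale_mult_left[symmetric] scale_mult_right[symmetric] prod
      by (simp add: vs.scale_left_distrib)
    finally show ?case by (simp add: path_weight_def add.commute)
  qed
  then show ?thesis using u by (simp add: u_eq)
qed

lemma der_commute:
  assumes "constricted Q0 Q1 s t sc \<nu>" "D1 \<in> Der0 Q0 sc \<nu>" "D2 \<in> Der0 Q0 sc \<nu>"
  shows "D1 (D2 a) = D2 (D1 a)"
proof -
  have "(\<lambda>a. D1 (D2 a)) = (\<lambda>a. D2 (D1 a))"
  proof (rule linear_eq_on_paths)
    show "klinear (\<lambda>a. D1 (D2 a))" "klinear (\<lambda>a. D2 (D1 a))"
      using Vector_Spaces.linear_compose[OF Der0_linear[OF assms(3)] Der0_linear[OF assms(2)]]
        Vector_Spaces.linear_compose[OF Der0_linear[OF assms(2)] Der0_linear[OF assms(3)]]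
      by (simp_all add: comp_def)
    show "D1 (D2 (img u)) = D2 (D1 (img u))" if "path u" for u
      using that assms by (simp add: der_img_path vsp.linear_scale[OF Der0_linear] mult.commute)
  qed
  then show ?thesis by (rule fun_cong[where x = a, elim_format]) simp
qed

definition walk_weight :: "('a \<Rightarrow> 'a) \<Rightarrow> ('v,'e) walk \<Rightarrow> 'k" where
  "walk_weight D w = sum_list (map (\<lambda>(\<alpha>, b). if b then arrow_weight D \<alpha> else - arrow_weight D \<alpha>) (snd w))"

lemma walk_weight_wconcat: "walk_weight D (wconcat w1 w2) = walk_weight D w1 + walk_weight D w2"
  by (simp add: walk_weight_def wconcat_def)

lemma walk_weight_winv: "walk_weight D (winv s t w) = - walk_weight D w"
proof -
  have "sum_list (map (\<lambda>(\<alpha>, b). if b then arrow_weight D \<alpha> else - arrow_weight D \<alpha>) (rev (map (\<lambda>(a, b). (a, \<not> b)) sts)))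
    = - sum_list (map (\<lambda>(\<alpha>, b). if b then arrow_weight D \<alpha> else - arrow_weight D \<alpha>) sts)" for sts :: "('e \<times> bool) list"
    by (induction sts) auto
  then show ?thesis by (simp add: walk_weight_def winv_def)
qed

lemma walk_weight_path_walk: "walk_weight D (path_walk u) = path_weight D u"
  by (simp add: walk_weight_def path_walk_def path_weight_def comp_def)

lemma walk_weight_homotopic:
  assumes constr: "constricted Q0 Q1 s t sc \<nu>" and D: "D \<in> Der0 Q0 sc \<nu>" and "w \<simeq> w'"
  shows "walk_weight D w = walk_weight D w'"
proof -
  have weighted_I: "weighted (path_weight D) x \<in> I" if "x \<in> I" for x
    using that nu_weighted[OF Der0_linear[OF D] der_img_path[OF constr D]]
      vsp.linear_0[OF Der0_linear[OF D]] by (simp add: mem_I_iff)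
  have const: "path_weight D v = path_weight D u"
    if "minimal_relation Q0 Q1 s t I \<rho>" "\<rho> u \<noteq> 0" "\<rho> v \<noteq> 0" for \<rho> u v
    by (rule const_on_minimal_relation_if_weighted_mem_I[OF _ that]) (rule weighted_I)
  show ?thesis using \<open>w \<simeq> w'\<close>
  proof (induction rule: homot.induct)
    case (h_concat w w' a b)
    then show ?case by (simp add: walk_weight_wconcat)
  next
    case (h_rel \<rho> u v)
    then show ?case using const[OF h_rel] by (simp add: walk_weight_path_walk)
  qed (auto simp: walk_weight_def)
qed

end

section \<open>The map \<open>\<theta>\<close>\<close>

locale based_presentation = quiver_presentation Q0 Q1 s t sc \<nu>
  for Q0 :: "'v set" and Q1 :: "'e set" and s t :: "'e \<Rightarrow> 'v"
    and sc :: "'k::field \<Rightarrow> 'a::ring_1 \<Rightarrow> 'a" and \<nu> :: "('v,'e,'k) pelem \<Rightarrow> 'a" +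
  fixes x0 :: 'v and \<gamma> :: "'v \<Rightarrow> ('v,'e) walk"
  assumes base: "x0 \<in> Q0"
    and gamma: "\<And>x. x \<in> Q0 \<Longrightarrow> walk (\<gamma> x) \<and> fst (\<gamma> x) = x0 \<and> wtgt s t (\<gamma> x) = x"
    and gamma_base: "\<gamma> x0 = (x0, [])"
begin

abbreviation "G \<equiv> pi1 Q0 Q1 s t I x0"
abbreviation "hc \<equiv> hclass Q0 Q1 s t I"

definition loop :: "('v,'e) walk \<Rightarrow> ('v,'e) walk" where
  "loop w = wconcat (wconcat (\<gamma> (fst w)) w) (winv s t (\<gamma> (wtgt s t w)))"

definition loop_weight :: "(('v,'e) walk set \<Rightarrow> 'k) \<Rightarrow> ('v,'e) walk \<Rightarrow> 'k" where
  "loop_weight f w = f (hc (loop w))"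

lemma walk_loop:
  assumes w: "walk w"
  shows "walk (loop w) \<and> fst (loop w) = x0 \<and> wtgt s t (loop w) = x0"
proof -
  note g1 = gamma[OF walk_fst[OF w]] and g2 = gamma[OF walk_wtgt[OF w]]
  note gamma_inv = walk_winv[of "\<gamma> (wtgt s t w)"]
  have "walk (wconcat (\<gamma> (fst w)) w)" "wtgt s t (wconcat (\<gamma> (fst w)) w) = wtgt s t w"
    using g1 w by (auto intro: walk_wconcat wtgt_wconcat)
  then show ?thesis
    using g1 g2 gamma_inv unfolding loop_def by (auto intro!: walk_wconcat simp: wtgt_wconcat)
qed

lemma carrier_pi1_iff: "X \<in> carrier G \<longleftrightarrow> (\<exists>w. X = hc w \<and> walk w \<and> fst w = x0 \<and> wtgt s t w = x0)"
  by (auto simp: pi1_def)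

lemma hclass_loop_carrier: "walk w \<Longrightarrow> hc (loop w) \<in> carrier G"
  unfolding carrier_pi1_iff using walk_loop by blast

lemma mult_pi1:
  assumes A: "walk A" and B: "walk B" and j: "wtgt s t A = fst B"
  shows "hc A \<otimes>\<^bsub>G\<^esub> hc B = hc (wconcat A B)"
proof -
  have "{w. \<exists>a\<in>hc A. \<exists>b\<in>hc B. w \<simeq> wconcat a b} = hc (wconcat A B)"
  proof (intro equalityI subsetI)
    fix w assume "w \<in> {w. \<exists>a\<in>hc A. \<exists>b\<in>hc B. w \<simeq> wconcat a b}"
    then obtain a b where ab: "a \<simeq> A" "b \<simeq> B" "w \<simeq> wconcat a b"
      by (auto simp: mem_hclass_iff)
    then have "wtgt s t a = fst b" using homotopic_walks j by metis
    then have "wconcat a b \<simeq> wconcat A B" using ab by (intro homotopic_wconcat)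
    then show "w \<in> hc (wconcat A B)" using ab(3) by (auto simp: mem_hclass_iff intro: h_trans)
  next
    fix w assume "w \<in> hc (wconcat A B)"
    then have "w \<simeq> wconcat A B" by (simp add: mem_hclass_iff)
    then show "w \<in> {w. \<exists>a\<in>hc A. \<exists>b\<in>hc B. w \<simeq> wconcat a b}"
      using mem_hclass_self[OF A] mem_hclass_self[OF B] by blast
  qed
  then show ?thesis by (simp add: pi1_def)
qed

lemma hom_kplus_mult: "f \<in> hom G kplus \<Longrightarrow> X \<in> carrier G \<Longrightarrow> Y \<in> carrier G \<Longrightarrow> f (X \<otimes>\<^bsub>G\<^esub> Y) = f X + f Y"
  by (simp add: hom_def kplus_def)

lemma hom_kplus_diff: "f \<in> hom G kplus \<Longrightarrow> g \<in> hom G kplus \<Longrightarrow> (\<lambda>X. f X - g X) \<in> hom G kplus"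
  by (simp add: hom_def kplus_def)

lemma loop_weight_homotopic:
  assumes h: "w \<simeq> w'"
  shows "loop_weight f w = loop_weight f w'"
proof -
  note p = homotopic_walks[OF h]
  note g1 = gamma[OF walk_fst[of w]] and g2 = gamma[OF walk_wtgt[of w]]
  have "wconcat (\<gamma> (fst w)) w \<simeq> wconcat (\<gamma> (fst w)) w'"
    using p g1 by (intro homotopic_wconcat[OF h_refl h]) auto
  moreover have "wtgt s t (wconcat (\<gamma> (fst w)) w) = fst (winv s t (\<gamma> (wtgt s t w)))"
    using p g1 g2 walk_winv[of "\<gamma> (wtgt s t w)"] by (simp add: wtgt_wconcat)
  ultimately have "loop w \<simeq> loop w'"
    unfolding loop_def using p g2 walk_winv[of "\<gamma> (wtgt s t w)"]
    by (auto intro: homotopic_wconcat h_refl)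
  then show ?thesis unfolding loop_weight_def by (simp add: hclass_eq)
qed

text \<open>The two paths \<open>\<gamma>\<close> to the junction vertex cancel up to homotopy.\<close>

lemma loop_weight_wconcat:
  assumes f: "f \<in> hom G kplus" and w1: "walk w1" and w2: "walk w2" and j: "wtgt s t w1 = fst w2"
  shows "loop_weight f (wconcat w1 w2) = loop_weight f w1 + loop_weight f w2"
proof -
  define m where "m = wtgt s t w1"
  have m: "m \<in> Q0" using w1 walk_wtgt m_def by blast
  note gm = gamma[OF m] and gamma_inv = walk_winv[of "\<gamma> m"]
  define P where "P = wconcat (\<gamma> (fst w1)) w1"
  define Q where "Q = wconcat w2 (winv s t (\<gamma> (wtgt s t w2)))"
  have P: "walk P" "wtgt s t P = m"
    unfolding P_def m_def using gamma[OF walk_fst[OF w1]] w1 by (auto intro!: walk_wconcat wtgt_wconcat)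
  have Q: "walk Q" "fst Q = m"
    unfolding Q_def m_def using gamma[OF walk_wtgt[OF w2]] walk_winv[of "\<gamma> (wtgt s t w2)"] w2 j by (auto intro!: walk_wconcat)
  have "wconcat (wconcat (winv s t (\<gamma> m)) (\<gamma> m)) Q \<simeq> wconcat (m, []) Q"
    using homotopic_winv_wconcat[of "\<gamma> m"] gm gamma_inv Q
    by (intro homotopic_wconcat h_refl) (auto simp: wtgt_wconcat)
  then have "wconcat P (wconcat (wconcat (winv s t (\<gamma> m)) (\<gamma> m)) Q) \<simeq> wconcat P Q"
    using P Q gm gamma_inv by (intro homotopic_wconcat h_refl) (auto simp: wconcat_Nil_left wtgt_wconcat)
  moreover have "wconcat P (wconcat (wconcat (winv s t (\<gamma> m)) (\<gamma> m)) Q) = wconcat (loop w1) (loop w2)"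
    unfolding loop_def P_def Q_def m_def using j by (simp add: wconcat_def)
  moreover have "wconcat P Q = loop (wconcat w1 w2)"
    unfolding loop_def P_def Q_def using j wtgt_wconcat[OF j[symmetric]] by (simp add: wconcat_def)
  ultimately have "hc (loop (wconcat w1 w2)) = hc (loop w1) \<otimes>\<^bsub>G\<^esub> hc (loop w2)"
    using walk_loop[OF w1] walk_loop[OF w2] by (simp add: mult_pi1 hclass_eq)
  then show ?thesis
    unfolding loop_weight_def using f w1 w2 by (simp add: hom_kplus_mult hclass_loop_carrier)
qed

lemma loop_weight_trivial:
  assumes "f \<in> hom G kplus" "x \<in> Q0"
  shows "loop_weight f (x, []) = 0"
proof -
  have "loop_weight f (wconcat (x, []) (x, [])) = loop_weight f (x, []) + loop_weight f (x, [])"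
    using assms by (intro loop_weight_wconcat) (simp_all add: walk_Nil)
  then show ?thesis by (simp only: wconcat_Nil_right add_cancel_right_right)
qed

lemma loop_weight_winv:
  assumes f: "f \<in> hom G kplus" and w: "walk w"
  shows "loop_weight f (winv s t w) = - loop_weight f w"
proof -
  have "loop_weight f w + loop_weight f (winv s t w) = loop_weight f (wconcat w (winv s t w))"
    using f w walk_winv[OF w] by (simp add: loop_weight_wconcat)
  also have "\<dots> = loop_weight f (fst w, [])"
    using homotopic_wconcat_winv[OF w] by (rule loop_weight_homotopic)
  also have "\<dots> = 0" using f w by (simp add: loop_weight_trivial walk_fst)
  finally show ?thesis by (simp add: add_eq_0_iff2)
qed

lemma loop_weight_closed: "fst w = x0 \<Longrightarrow> wtgt s t w = x0 \<Longrightarrow> loop_weight f w = f (hc w)"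
  by (cases w) (simp add: loop_weight_def loop_def gamma_base wconcat_def)

lemma loop_weight_coboundary:
  assumes h: "h \<in> hom G kplus"
    and arrows: "\<And>\<alpha>. \<alpha> \<in> Q1 \<Longrightarrow> loop_weight h (s \<alpha>, [(\<alpha>, True)]) = c (t \<alpha>) - c (s \<alpha>)"
    and w: "walk w"
  shows "loop_weight h w = c (wtgt s t w) - c (fst w)"
  using w
proof (induction "snd w" arbitrary: w)
  case Nil
  then show ?case using loop_weight_trivial[OF h] by (cases w) (simp add: walk_Nil)
next
  case (Cons st sts)
  obtain x where w: "w = (x, st # sts)" using Cons.hyps(2) by (metis prod.collapse)
  obtain \<alpha> b where st: "st = (\<alpha>, b)" by (cases st)
  define y where "y = step_tgt s t st"
  have tail: "walk (y, sts)" and \<alpha>: "\<alpha> \<in> Q1" "step_src s t st = x"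
    using Cons.prems by (auto simp: w walk_Cons st y_def)
  have step: "walk (x, [st])" and wtgt_step: "wtgt s t (x, [st]) = y"
    using walk_arrow[OF \<alpha>(1)] \<alpha> by (cases b; simp add: st y_def)+
  have "loop_weight h (x, [st]) = c y - c x"
  proof (cases b)
    case True
    then show ?thesis using arrows[OF \<alpha>(1)] \<alpha>(2) by (simp add: st y_def)
  next
    case False
    then have "(x, [st]) = winv s t (s \<alpha>, [(\<alpha>, True)])"
      using \<alpha>(2) by (simp add: st winv_def)
    then show ?thesis
      using False arrows[OF \<alpha>(1)] loop_weight_winv[OF h] walk_arrow[OF \<alpha>(1)] \<alpha>(2)
      by (simp add: st y_def)
  qed
  moreover have "w = wconcat (x, [st]) (y, sts)" by (simp add: w wconcat_def)
  moreover have "loop_weight h (y, sts) = c (wtgt s t (y, sts)) - c y"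
    using Cons.hyps(1)[of "(y, sts)"] tail by simp
  ultimately show ?case
    using loop_weight_wconcat[OF h step tail] wtgt_wconcat[of "(y, sts)" s t "(x, [st])"] wtgt_step
    by (simp add: w)
qed

lemma mem_theta_iff:
  "D \<in> theta Q0 Q1 s t sc \<nu> \<gamma> f \<longleftrightarrow> D \<in> Der0 Q0 sc \<nu> \<and>
     (\<exists>D0 \<in> Der0 Q0 sc \<nu>. (\<forall>u. path u \<longrightarrow> D0 (img u) = sc (loop_weight f (path_walk u)) (img u)) \<and>
        (\<lambda>a. D a - D0 a) \<in> Int0 Q0 sc \<nu>)"
proof -
  have "loop_weight f (path_walk u) =
      f (hc (wconcat (wconcat (\<gamma> (fst u)) (path_walk u)) (winv s t (\<gamma> (ptgt t u)))))" if "path u" for u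
    using walk_path_walk[OF that] by (simp add: loop_weight_def loop_def)
  then show ?thesis unfolding theta_def by simp
qed

lemma theta_eq_der_class:
  assumes D0: "D0 \<in> Der0 Q0 sc \<nu>"
    and diag: "\<And>u. path u \<Longrightarrow> D0 (img u) = sc (loop_weight f (path_walk u)) (img u)"
  shows "theta Q0 Q1 s t sc \<nu> \<gamma> f = der_class Q0 sc \<nu> D0"
proof -
  have unique: "D0' = D0"
    if D0': "D0' \<in> Der0 Q0 sc \<nu>"
      and diag': "\<forall>u. path u \<longrightarrow> D0' (img u) = sc (loop_weight f (path_walk u)) (img u)" for D0'
  proof (rule linear_eq_on_paths)
    show "klinear D0'" "klinear D0" using D0' D0 by (simp_all add: Der0_linear)
    show "D0' (img u) = D0 (img u)" if "path u" for u using diag'[rule_format, OF that] diag[OF that] by simp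
  qed
  show ?thesis
    unfolding set_eq_iff mem_theta_iff der_class_def mem_Collect_eq using unique D0 diag by blast
qed

lemma der_of_hom:
  assumes f: "f \<in> hom G kplus"
  shows "\<exists>D0 \<in> Der0 Q0 sc \<nu>. \<forall>u. path u \<longrightarrow> D0 (img u) = sc (loop_weight f (path_walk u)) (img u)"
proof -
  define F where "F u = loop_weight f (path_walk u)" for u
  have additive: "F (fst p, snd p @ snd q) = F p + F q" if "path p" "path q" "fst q = ptgt t p" for p q
    unfolding F_def path_walk_append using walk_path_walk that by (intro loop_weight_wconcat f) auto
  have const: "F u = F v" if "minimal_relation Q0 Q1 s t I \<rho>" "\<rho> u \<noteq> 0" "\<rho> v \<noteq> 0" for \<rho> u v
    unfolding F_def using h_rel[OF that] by (rule loop_weight_homotopic)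
  have "weight_der F \<in> Der0 Q0 sc \<nu>"
    by (rule weight_der_Der0; rule additive const; assumption)
  moreover have "weight_der F (img u) = sc (F u) (img u)" if "path u" for u
    by (rule weight_der_img[OF _ that]; rule const; assumption)
  ultimately show ?thesis unfolding F_def by blast
qed

lemma theta_in_HH1: "f \<in> hom G kplus \<Longrightarrow> theta Q0 Q1 s t sc \<nu> \<gamma> f \<in> HH1 Q0 sc \<nu>"
  using der_of_hom theta_eq_der_class unfolding HH1_def by blast

lemma theta_inj:
  assumes f: "f \<in> hom G kplus" and g: "g \<in> hom G kplus"
    and eq: "theta Q0 Q1 s t sc \<nu> \<gamma> f = theta Q0 Q1 s t sc \<nu> \<gamma> g" and X: "X \<in> carrier G"
  shows "f X = g X"
proof -
  obtain Df where Df: "Df \<in> Der0 Q0 sc \<nu>" "\<And>u. path u \<Longrightarrow> Df (img u) = sc (loop_weight f (path_walk u)) (img u)"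
    using der_of_hom[OF f] by blast
  obtain Dg where Dg: "Dg \<in> Der0 Q0 sc \<nu>" "\<And>u. path u \<Longrightarrow> Dg (img u) = sc (loop_weight g (path_walk u)) (img u)"
    using der_of_hom[OF g] by blast
  have "Df \<in> der_class Q0 sc \<nu> Dg"
    using der_class_self[OF Df(1)] eq theta_eq_der_class[OF Df] theta_eq_der_class[OF Dg] by simp
  then obtain c where c: "(\<lambda>a. Df a - Dg a) = (\<lambda>a. idem_comb c * a - a * idem_comb c)"
    by (auto simp: der_class_def Int0_iff)
  define h where "h X = f X - g X" for X
  have h: "h \<in> hom G kplus" unfolding h_def using f g by (rule hom_kplus_diff)
  have "loop_weight h (s \<alpha>, [(\<alpha>, True)]) = c (t \<alpha>) - c (s \<alpha>)" if \<alpha>: "\<alpha> \<in> Q1" for \<alpha>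
  proof -
    have "sc (loop_weight h (s \<alpha>, [(\<alpha>, True)])) (img (s \<alpha>, [\<alpha>])) = sc (c (t \<alpha>) - c (s \<alpha>)) (img (s \<alpha>, [\<alpha>]))"
      using fun_cong[OF c, of "img (s \<alpha>, [\<alpha>])"] idem_comb_commutator_img[OF path_arrow[OF \<alpha>], of c]
        Df(2)[OF path_arrow[OF \<alpha>]] Dg(2)[OF path_arrow[OF \<alpha>]]
      by (simp add: h_def loop_weight_def path_walk_def vs.scale_left_diff_distrib)
    then show ?thesis using img_arrow_nonzero[OF \<alpha>] vs.scale_right_imp_eq by blast
  qed
  moreover obtain w where w: "X = hc w" "walk w" "fst w = x0" "wtgt s t w = x0"
    using X unfolding carrier_pi1_iff by blast
  ultimately have "h X = 0"
    using loop_weight_coboundary[OF h _ w(2)] loop_weight_closed[OF w(3,4)] by (simp add: w)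
  then show ?thesis by (simp add: h_def)
qed

lemma hom_of_der:
  assumes constr: "constricted Q0 Q1 s t sc \<nu>" and D: "D \<in> Der0 Q0 sc \<nu>"
  obtains f where "f \<in> hom G kplus" "\<And>w. walk w \<Longrightarrow> f (hc w) = walk_weight D w"
proof
  define f where "f X = walk_weight D (SOME w. w \<in> X)" for X :: "('v,'e) walk set"
  show f_hc: "f (hc w) = walk_weight D w" if "walk w" for w
  proof -
    have "(SOME w'. w' \<in> hc w) \<in> hc w" using mem_hclass_self[OF that] by (rule someI)
    then show ?thesis
      unfolding f_def mem_hclass_iff by (rule walk_weight_homotopic[OF constr D])
  qed
  show "f \<in> hom G kplus"
  proof (rule homI)
    fix X Y assume "X \<in> carrier G" "Y \<in> carrier G"
    then obtain A B where A: "X = hc A" "walk A" "fst A = x0" "wtgt s t A = x0"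
      and B: "Y = hc B" "walk B" "fst B = x0" "wtgt s t B = x0"
      unfolding carrier_pi1_iff by blast
    then have "X \<otimes>\<^bsub>G\<^esub> Y = hc (wconcat A B)" and "walk (wconcat A B)"
      by (simp_all add: mult_pi1 walk_wconcat)
    then show "f (X \<otimes>\<^bsub>G\<^esub> Y) = f X \<otimes>\<^bsub>kplus\<^esub> f Y"
      using A B f_hc by (simp add: kplus_def walk_weight_wconcat)
  qed (simp add: kplus_def)
qed

lemma theta_surj:
  assumes constr: "constricted Q0 Q1 s t sc \<nu>" and C: "C \<in> HH1 Q0 sc \<nu>"
  shows "\<exists>f \<in> hom G kplus. theta Q0 Q1 s t sc \<nu> \<gamma> f = C"
proof -
  obtain D where D: "D \<in> Der0 Q0 sc \<nu>" and C_eq: "C = der_class Q0 sc \<nu> D"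
    using C unfolding HH1_def by blast
  obtain f where f: "f \<in> hom G kplus" and f_hc: "\<And>w. walk w \<Longrightarrow> f (hc w) = walk_weight D w"
    using hom_of_der[OF constr D] by blast
  obtain D0 where D0: "D0 \<in> Der0 Q0 sc \<nu>"
    and diag: "\<And>u. path u \<Longrightarrow> D0 (img u) = sc (loop_weight f (path_walk u)) (img u)"
    using der_of_hom[OF f] by blast
  define c where "c z = - walk_weight D (\<gamma> z)" for z
  have "(\<lambda>a. D0 a - D a) = (\<lambda>a. idem_comb c * a - a * idem_comb c)"
  proof (rule linear_eq_on_paths)
    show "klinear (\<lambda>a. D0 a - D a)"
      using D D0 by (intro vsp.linear_compose_sub Der0_linear)
    show "klinear (\<lambda>a. idem_comb c * a - a * idem_comb c)"
      by (rule klinear_commutator)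
  next
    fix u assume u: "path u"
    note pw = walk_path_walk[OF u]
    have "loop_weight f (path_walk u) - path_weight D u = c (ptgt t u) - c (fst u)"
      using f_hc[OF conjunct1[OF walk_loop[OF conjunct1[OF pw]]]] pw
      by (simp add: loop_weight_def loop_def walk_weight_wconcat walk_weight_winv walk_weight_path_walk c_def)
    then show "D0 (img u) - D (img u) = idem_comb c * img u - img u * idem_comb c"
      using diag[OF u] der_img_path[OF constr D u] idem_comb_commutator_img[OF u]
      by (simp add: vs.scale_left_diff_distrib[symmetric])
  qed
  then have "der_class Q0 sc \<nu> D0 = C"
    unfolding C_eq by (intro der_class_eq) (auto simp: Int0_iff)
  then show ?thesis using theta_eq_der_class[OF D0 diag] f by blast
qed

lemma theta_add:
  assumes "D1 \<in> theta Q0 Q1 s t sc \<nu> \<gamma> f" "D2 \<in> theta Q0 Q1 s t sc \<nu> \<gamma> g"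
  shows "(\<lambda>a. D1 a + D2 a) \<in> theta Q0 Q1 s t sc \<nu> \<gamma> (\<lambda>X. f X + g X)"
proof -
  obtain E1 where "D1 \<in> Der0 Q0 sc \<nu>" "E1 \<in> Der0 Q0 sc \<nu>"
    "\<forall>u. path u \<longrightarrow> E1 (img u) = sc (loop_weight f (path_walk u)) (img u)" "(\<lambda>a. D1 a - E1 a) \<in> Int0 Q0 sc \<nu>"
    using assms(1) unfolding mem_theta_iff by blast
  moreover obtain E2 where "D2 \<in> Der0 Q0 sc \<nu>" "E2 \<in> Der0 Q0 sc \<nu>"
    "\<forall>u. path u \<longrightarrow> E2 (img u) = sc (loop_weight g (path_walk u)) (img u)" "(\<lambda>a. D2 a - E2 a) \<in> Int0 Q0 sc \<nu>"
    using assms(2) unfolding mem_theta_iff by blast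
  ultimately show ?thesis
    unfolding mem_theta_iff using Int0_add[of "\<lambda>a. D1 a - E1 a" "\<lambda>a. D2 a - E2 a"]
    by (intro conjI Der0_add bexI[of _ "\<lambda>a. E1 a + E2 a"])
      (simp_all add: loop_weight_def vs.scale_left_distrib algebra_simps)
qed

lemma theta_scale:
  assumes "D \<in> theta Q0 Q1 s t sc \<nu> \<gamma> f"
  shows "(\<lambda>a. sc c (D a)) \<in> theta Q0 Q1 s t sc \<nu> \<gamma> (\<lambda>X. c * f X)"
proof -
  obtain E where "D \<in> Der0 Q0 sc \<nu>" "E \<in> Der0 Q0 sc \<nu>"
    "\<forall>u. path u \<longrightarrow> E (img u) = sc (loop_weight f (path_walk u)) (img u)" "(\<lambda>a. D a - E a) \<in> Int0 Q0 sc \<nu>"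
    using assms unfolding mem_theta_iff by blast
  then show ?thesis
    unfolding mem_theta_iff using Int0_scale[of "\<lambda>a. D a - E a" c]
    by (intro conjI Der0_scale bexI[of _ "\<lambda>a. sc c (E a)"])
      (simp_all add: loop_weight_def vs.scale_right_diff_distrib)
qed

end

theorem proposition2p7:
  fixes Q0 :: "'v set" and Q1 :: "'e set" and s t :: "'e \<Rightarrow> 'v"
    and sc :: "'k::alg_closed_field \<Rightarrow> 'a::ring_1 \<Rightarrow> 'a"
    and \<nu> :: "('v,'e,'k) pelem \<Rightarrow> 'a"
    and x0 :: 'v and T :: "'e set" and \<gamma> :: "'v \<Rightarrow> ('v,'e) walk"
  defines "I \<equiv> pkernel Q0 Q1 s t \<nu>"
  assumes quiv: "quiver Q0 Q1 s t"
    and conn: "connected_quiver Q0 Q1 s t"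
    and acyc: "acyclic_quiver Q0 Q1 s t"
    and alg: "k_algebra sc"
    and pres: "presentation Q0 Q1 s t sc \<nu>"
    and adm: "admissible Q0 Q1 s t I"
    and constr: "constricted Q0 Q1 s t sc \<nu>"
    and x0: "x0 \<in> Q0"
    and tree: "maximal_tree Q0 Q1 s t T"
    and gamma: "\<And>x. x \<in> Q0 \<Longrightarrow> is_walk Q0 T s t (\<gamma> x) \<and> fst (\<gamma> x) = x0 \<and> wtgt s t (\<gamma> x) = x \<and>
        (\<forall>w. is_walk Q0 T s t w \<and> fst w = x0 \<and> wtgt s t w = x \<longrightarrow> length (snd (\<gamma> x)) \<le> length (snd w))"
  shows "(\<forall>f \<in> hom (pi1 Q0 Q1 s t I x0) kplus. theta Q0 Q1 s t sc \<nu> \<gamma> f \<in> HH1 Q0 sc \<nu>)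
       \<and> (\<forall>f \<in> hom (pi1 Q0 Q1 s t I x0) kplus. \<forall>g \<in> hom (pi1 Q0 Q1 s t I x0) kplus.
            theta Q0 Q1 s t sc \<nu> \<gamma> f = theta Q0 Q1 s t sc \<nu> \<gamma> g
              \<longrightarrow> (\<forall>X \<in> carrier (pi1 Q0 Q1 s t I x0). f X = g X))
       \<and> (\<forall>C \<in> HH1 Q0 sc \<nu>. \<exists>f \<in> hom (pi1 Q0 Q1 s t I x0) kplus. theta Q0 Q1 s t sc \<nu> \<gamma> f = C)
       \<and> (\<forall>f \<in> hom (pi1 Q0 Q1 s t I x0) kplus. \<forall>g \<in> hom (pi1 Q0 Q1 s t I x0) kplus.
            \<forall>D1 \<in> theta Q0 Q1 s t sc \<nu> \<gamma> f. \<forall>D2 \<in> theta Q0 Q1 s t sc \<nu> \<gamma> g.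
              (\<lambda>a. D1 a + D2 a) \<in> theta Q0 Q1 s t sc \<nu> \<gamma> (\<lambda>X. f X + g X))
       \<and> (\<forall>f \<in> hom (pi1 Q0 Q1 s t I x0) kplus. \<forall>c. \<forall>D \<in> theta Q0 Q1 s t sc \<nu> \<gamma> f.
              (\<lambda>a. sc c (D a)) \<in> theta Q0 Q1 s t sc \<nu> \<gamma> (\<lambda>X. c * f X))
       \<and> (\<forall>D1 \<in> Der0 Q0 sc \<nu>. \<forall>D2 \<in> Der0 Q0 sc \<nu>.
            (\<lambda>a. D1 (D2 a) - D2 (D1 a)) \<in> Int0 Q0 sc \<nu>)"
proof -
  have "is_walk Q0 T s t (x0, [])" using x0 by (simp add: is_walk_def)
  then have "length (snd (\<gamma> x0)) \<le> 0" using gamma[OF x0] by fastforce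
  then have gamma_base: "\<gamma> x0 = (x0, [])"
    using gamma[OF x0] by (metis le_zero_eq length_0_conv prod.collapse)
  have "T \<subseteq> Q1" using tree by (simp add: maximal_tree_def)
  then have "is_walk Q0 Q1 s t (\<gamma> x)" if "x \<in> Q0" for x
    using gamma[OF that] by (auto simp: is_walk_def)
  then interpret based_presentation Q0 Q1 s t sc \<nu> x0 \<gamma>
    using quiv acyc alg pres adm x0 gamma gamma_base unfolding I_def
    by unfold_locales simp_all
  have inj: "\<forall>X \<in> carrier G. f X = g X"
    if "f \<in> hom G kplus" "g \<in> hom G kplus" "theta Q0 Q1 s t sc \<nu> \<gamma> f = theta Q0 Q1 s t sc \<nu> \<gamma> g" for f g
    using theta_inj[OF that] by blast
  have commutator: "(\<lambda>a. D1 (D2 a) - D2 (D1 a)) \<in> Int0 Q0 sc \<nu>"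
    if "D1 \<in> Der0 Q0 sc \<nu>" "D2 \<in> Der0 Q0 sc \<nu>" for D1 D2
    using zero_mem_Int0 by (simp add: der_commute[OF constr that])
  show ?thesis
    unfolding I_def
    by (intro conjI)
      (use theta_in_HH1 in blast, use inj in blast, use theta_surj[OF constr] in blast,
       use theta_add in blast, use theta_scale in blast, use commutator in blast)
qed

end
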